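(* Assume the filtration is regular with constant $R$, let $r=\frac1{2(R+3)}$ and let $T=T(\sigma)$ be a martingale transform. For every bounded $f$ there exists a sparse sequence of stopping times $\{\nu_j\}_{j\ge0}$ such that $$T^*f\lesssim\sum_{j=0}^\infty\mathsf{P}^r_{\nu_j}(\mathcal{M}_{(\nu_j)}f)\,\mathbf{1}_{\{\nu_j<\infty\}},$$ with implicit constant independent of $f$.
   Context: $(\Omega,\mathcal{F},\mu)$ is a probability space with filtration $\{\mathcal{F}_k\}_{k\ge0}$ generating $\mathcal{F}$, $\mathsf{E}_k=\mathsf{E}[\cdot|\mathcal{F}_k]$, $df_k=\mathsf{E}_kf-\mathsf{E}_{k-1}f$ ($k\ge1$), $df_0=\mathsf{E}_0f$. Regular with constant $R$: $\mathsf{E}_kf\le R\,\mathsf{E}_{k-1}f$ a.e. for nonnegative integrable $f$. $\sigma=\{\sigma_k\}$ with $\sigma_k$ $\mathcal{F}_{k-1}$-measurable ($\mathcal{F}_{-1}:=\mathcal{F}_0$), $\sup_k\|\sigma_k\|_\infty\le1$; $T^*f=\sup_{\ell\ge0}|\sum_{0\le k\le\ell}\sigma_kdf_k|$. $\mathsf{P}^r_kg(x):=\inf\{t\in\mathbb{Q}:\mathsf{E}_k[\mathbf{1}_{\{g>t\}}](x)\le r\}$, $\mathsf{P}^r_\nu g=\sum_k\mathbf{1}_{\{\nu=k\}}\mathsf{P}^r_kg$, $\mathcal{M}_{(\nu)}f(x)=\sup_{k\ge\nu(x)}|\mathsf{E}_kf(x)|$. An increasing sequence of stopping times $\{\nu_k\}$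 is sparse if with $E_k=\{\nu_k<\infty\}$, for every $k$ and $A\subseteq E_k$ with $A\in\mathcal{F}_{\nu_k}$, $\mu(A\cap E_{k+1})\le\frac12\mu(A)$. *)

theory Defs
  imports "HOL-Probability.Probability"
begin

definition condE :: "'a measure \<Rightarrow> (nat \<Rightarrow> 'a measure) \<Rightarrow> nat \<Rightarrow> ('a \<Rightarrow> real) \<Rightarrow> 'a \<Rightarrow> real" where
  "condE M F k f = real_cond_exp M (F k) f"

definition is_filtration :: "'a measure \<Rightarrow> (nat \<Rightarrow> 'a measure) \<Rightarrow> bool" where
  "is_filtration M F \<longleftrightarrow> (\<forall>k. subalgebra M (F k)) \<and> (\<forall>k. sets (F k) \<subseteq> sets (F (Suc k)))
     \<and> sets M = sigma_sets (space M) (\<Union>k. sets (F k))"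

definition regular_filtration :: "'a measure \<Rightarrow> (nat \<Rightarrow> 'a measure) \<Rightarrow> real \<Rightarrow> bool" where
  "regular_filtration M F R \<longleftrightarrow>
     (\<forall>f k. integrable M f \<longrightarrow> (\<forall>x\<in>space M. 0 \<le> f x) \<longrightarrow> 1 \<le> k \<longrightarrow>
        (AE x in M. condE M F k f x \<le> R * condE M F (k - 1) f x))"

definition mdiff :: "'a measure \<Rightarrow> (nat \<Rightarrow> 'a measure) \<Rightarrow> ('a \<Rightarrow> real) \<Rightarrow> nat \<Rightarrow> 'a \<Rightarrow> real" where
  "mdiff M F f k x = (if k = 0 then condE M F 0 f x else condE M F k f x - condE M F (k - 1) f x)"

text \<open>Predictable sequence sigma (sigma_k is F_{k-1}-measurable, F_{-1} = F_0) with sup norms \<le> 1.\<close>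
definition predictable_bounded :: "'a measure \<Rightarrow> (nat \<Rightarrow> 'a measure) \<Rightarrow> (nat \<Rightarrow> 'a \<Rightarrow> real) \<Rightarrow> bool" where
  "predictable_bounded M F \<sigma> \<longleftrightarrow>
     (\<forall>k. \<sigma> k \<in> borel_measurable (F (k - 1)) \<and> (AE x in M. \<bar>\<sigma> k x\<bar> \<le> 1))"

definition Tstar :: "'a measure \<Rightarrow> (nat \<Rightarrow> 'a measure) \<Rightarrow> (nat \<Rightarrow> 'a \<Rightarrow> real) \<Rightarrow> ('a \<Rightarrow> real) \<Rightarrow> 'a \<Rightarrow> ennreal" where
  "Tstar M F \<sigma> f x = (SUP l. ennreal \<bar>\<Sum>k\<le>l. \<sigma> k x * mdiff M F f k x\<bar>)"

definition Pr :: "'a measure \<Rightarrow> (nat \<Rightarrow> 'a measure) \<Rightarrow> real \<Rightarrow> nat \<Rightarrow> ('a \<Rightarrow> ereal) \<Rightarrow> 'a \<Rightarrow> ereal" where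
  "Pr M F r k g x = Inf {ereal t | t. t \<in> \<rat> \<and>
      condE M F k (indicator {y \<in> space M. ereal t < g y}) x \<le> r}"

definition Pr_stop :: "'a measure \<Rightarrow> (nat \<Rightarrow> 'a measure) \<Rightarrow> real \<Rightarrow> ('a \<Rightarrow> enat) \<Rightarrow> ('a \<Rightarrow> ereal) \<Rightarrow> 'a \<Rightarrow> ereal" where
  "Pr_stop M F r \<nu> g x = (case \<nu> x of enat k \<Rightarrow> Pr M F r k g x | \<infinity> \<Rightarrow> 0)"

definition maxop_stop :: "'a measure \<Rightarrow> (nat \<Rightarrow> 'a measure) \<Rightarrow> ('a \<Rightarrow> enat) \<Rightarrow> ('a \<Rightarrow> real) \<Rightarrow> 'a \<Rightarrow> ereal" where
  "maxop_stop M F \<nu> f x = (SUP k \<in> {k. \<nu> x \<le> enat k}. ereal \<bar>condE M F k f x\<bar>)"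

definition stopping_time_F :: "'a measure \<Rightarrow> (nat \<Rightarrow> 'a measure) \<Rightarrow> ('a \<Rightarrow> enat) \<Rightarrow> bool" where
  "stopping_time_F M F \<nu> \<longleftrightarrow> (\<forall>k. {x \<in> space M. \<nu> x \<le> enat k} \<in> sets (F k))"

definition stopped_sets :: "'a measure \<Rightarrow> (nat \<Rightarrow> 'a measure) \<Rightarrow> ('a \<Rightarrow> enat) \<Rightarrow> 'a set set" where
  "stopped_sets M F \<nu> = {A \<in> sets M. \<forall>k. A \<inter> {x \<in> space M. \<nu> x \<le> enat k} \<in> sets (F k)}"

definition sparse_stopping :: "'a measure \<Rightarrow> (nat \<Rightarrow> 'a measure) \<Rightarrow> (nat \<Rightarrow> 'a \<Rightarrow> enat) \<Rightarrow> bool" where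
  "sparse_stopping M F \<nu> \<longleftrightarrow>
     (\<forall>j. stopping_time_F M F (\<nu> j)) \<and>
     (\<forall>j. \<forall>x\<in>space M. \<nu> j x \<le> \<nu> (Suc j) x) \<and>
     (\<forall>j A. A \<in> stopped_sets M F (\<nu> j) \<longrightarrow> A \<subseteq> {x \<in> space M. \<nu> j x < \<infinity>} \<longrightarrow>
        measure M (A \<inter> {x \<in> space M. \<nu> (Suc j) x < \<infinity>}) \<le> measure M A / 2)"

end

(*
  Starting from nu_0 = 0, the stopping time nu_(j+1) is the first time k > nu_j at which either
  E_k 1_B > theta = 1/(R+1) for the bad set B = {M_(nu_j) f > mu_j}, or the partial martingale
  transform has moved by more than K mu_j = mu_j / r since nu_j.  Here mu_j is an F_(nu_j)-measurable
  dyadic substitute for P^r_(nu_j) (M_(nu_j) f), at most twice as large.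

  Regularity keeps |E_k f| <= mu_j for nu_j <= k <= nu_(j+1): a larger value at time k puts an
  F_k-subset of B of full conditional probability there, so E_(k-1) 1_B >= 1/R > theta and the
  process would have stopped at k - 1.  Between consecutive stops the transform therefore moves by at
  most (K + 2) mu_j, whence T^* f <= (K + 3) sum_j mu_j <= 2 (K + 3) sum_j P^r_(nu_j) (M_(nu_j) f).

  Sparseness: on an F_(nu_j)-set A, the first reason for stopping has probability at most
  (r / theta) prob(A) by Doob's maximal inequality, since E_(nu_j) 1_B <= r; the second has
  probability at most (4 / K^2) prob(A) by orthogonality of martingale differences and Chebyshev's
  inequality, comparing the stopped transform with the stopped martingale, which stays within 2 mu_j;
  and r / theta + 4 / K^2 <= 1/2.
*)
theory Submission
  imports Defs
begin

lemma SUP_Collect_eq_SUP_if: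
  fixes h :: "'i \<Rightarrow> 'b::complete_lattice"
  shows "(SUP k\<in>{k. P k}. h k) = (SUP k. if P k then h k else bot)"
proof (rule antisym)
  show "(SUP k\<in>{k. P k}. h k) \<le> (SUP k. if P k then h k else bot)"
  proof (rule SUP_least)
    fix k assume "k \<in> {k. P k}"
    then show "h k \<le> (SUP k. if P k then h k else bot)" by (intro SUP_upper2[of k]) auto
  qed
  show "(SUP k. if P k then h k else bot) \<le> (SUP k\<in>{k. P k}. h k)"
    by (rule SUP_least) (auto intro: SUP_upper)
qed

lemma INF_Collect_eq_INF_if:
  fixes h :: "'i \<Rightarrow> 'b::complete_lattice"
  shows "(INF k\<in>{k. P k}. h k) = (INF k. if P k then h k else top)"
proof (rule antisym)
  show "(INF k. if P k then h k else top) \<le> (INF k\<in>{k. P k}. h k)"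
  proof (rule INF_greatest)
    fix k assume "k \<in> {k. P k}"
    then show "(INF k. if P k then h k else top) \<le> h k" by (intro INF_lower2[of k]) auto
  qed
  show "(INF k\<in>{k. P k}. h k) \<le> (INF k. if P k then h k else top)"
    by (rule INF_greatest) (auto intro: INF_lower)
qed

lemma powr_two_minus_nat: "2 powr (- real n) = (1 / 2 :: real) ^ n"
  by (simp add: powr_minus powr_realpow power_one_over inverse_eq_divide)

lemma ex_powr_two_less:
  fixes g :: ereal
  assumes "0 < g"
  shows "\<exists>n::nat. ereal (2 powr real_of_int (- int n)) < g"
proof (cases g)
  case (real z)
  with assms obtain n where "(1 / 2 :: real) ^ n < z"
    using real_arch_pow_inv[of z "1 / 2"] by auto
  with real show ?thesis by (auto simp: powr_two_minus_nat)
qed (use assms in auto)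

lemma INF_powr_two_int: "(INF m::int. ereal (2 powr real_of_int m)) = 0"
proof (rule antisym)
  show "(INF m::int. ereal (2 powr real_of_int m)) \<le> 0"
  proof (rule ccontr)
    assume "\<not> ?thesis"
    then obtain n where "ereal (2 powr real_of_int (- int n)) < (INF m::int. ereal (2 powr real_of_int m))"
      using ex_powr_two_less by force
    then show False by (meson INF_lower UNIV_I not_less)
  qed
qed (auto intro: INF_greatest)

lemma le_two_mult_if_dyadic_bound:
  fixes y :: ereal and t :: real
  assumes dyadic: "\<And>m::int. t \<le> 2 powr real_of_int m \<Longrightarrow> y \<le> ereal (2 powr real_of_int m)"
    and "0 \<le> t"
  shows "y \<le> ereal (2 * t)"
proof (cases "t = 0")
  case True
  then have "y \<le> (INF m::int. ereal (2 powr real_of_int m))"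
    using dyadic by (auto intro: INF_greatest)
  with True show ?thesis by (simp add: INF_powr_two_int zero_ereal_def)
next
  case False
  with assms(2) have "0 < t" by simp
  define m where "m = \<lceil>log 2 t\<rceil>"
  have "t = 2 powr log 2 t" using \<open>0 < t\<close> by simp
  also have "\<dots> \<le> 2 powr real_of_int m" unfolding m_def by simp
  finally have "y \<le> ereal (2 powr real_of_int m)" by (rule dyadic)
  also have "2 powr real_of_int m \<le> 2 powr (log 2 t + 1)" unfolding m_def by simp
  also have "\<dots> = 2 * t" using \<open>0 < t\<close> by (simp add: powr_add)
  finally show ?thesis by simp
qed

lemma ereal_mult_half_le_iff:
  fixes a s :: ereal
  assumes "0 \<le> a"
  shows "a * ereal (1 / 2) \<le> s \<longleftrightarrow> a \<le> ereal 2 * s"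
  using assms by (cases a; cases s) auto

lemma e2ennreal_le_two_mult:
  assumes "0 \<le> a" "a \<le> ereal 2 * b"
  shows "e2ennreal a \<le> 2 * e2ennreal b"
proof (cases b)
  case (real b')
  with assms obtain a' where a': "a = ereal a'" "0 \<le> a'" "a' \<le> 2 * b'" by (cases a) auto
  then have "ennreal a' \<le> ennreal (2 * b')" by (intro ennreal_leI)
  also have "\<dots> = 2 * ennreal b'" using a' by (simp add: ennreal_mult)
  finally show ?thesis using a' real by simp
qed (use assms in auto)

lemma (in finite_measure) measure_Int_le_if_partition:
  assumes "countable I" and X: "\<And>i. i \<in> I \<Longrightarrow> X i \<in> sets M" and "disjoint_family_on X I"
    and A: "A \<in> sets M" "A \<subseteq> (\<Union>i\<in>I. X i)" and E: "E \<in> sets M" and "0 \<le> c"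
    and pieces: "\<And>i. i \<in> I \<Longrightarrow> measure M (A \<inter> X i \<inter> E) \<le> c * measure M (A \<inter> X i)"
  shows "measure M (A \<inter> E) \<le> c * measure M A"
proof -
  have disj: "disjoint_family_on (\<lambda>i. A \<inter> X i) I" "disjoint_family_on (\<lambda>i. A \<inter> X i \<inter> E) I"
    using assms(3) unfolding disjoint_family_on_def by auto
  have "A = (\<Union>i\<in>I. A \<inter> X i)" "A \<inter> E = (\<Union>i\<in>I. A \<inter> X i \<inter> E)"
    using A(2) by auto
  then have sum_A: "emeasure M A = (\<integral>\<^sup>+i. emeasure M (A \<inter> X i) \<partial>count_space I)"
    and sum_AE: "emeasure M (A \<inter> E) = (\<integral>\<^sup>+i. emeasure M (A \<inter> X i \<inter> E) \<partial>count_space I)"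
    using emeasure_UN_countable[OF _ \<open>countable I\<close> disj(1)]
      emeasure_UN_countable[OF _ \<open>countable I\<close> disj(2)] X A(1) E by auto
  have "emeasure M (A \<inter> X i \<inter> E) \<le> emeasure M (A \<inter> X i) * ennreal c" if "i \<in> I" for i
    using pieces[OF that] \<open>0 \<le> c\<close>
    by (simp add: emeasure_eq_measure ennreal_mult'[symmetric] mult.commute)
  then have "emeasure M (A \<inter> E) \<le> (\<integral>\<^sup>+i. emeasure M (A \<inter> X i) * ennreal c \<partial>count_space I)"
    unfolding sum_AE by (intro nn_integral_mono) simp
  also have "\<dots> = emeasure M A * ennreal c"
    unfolding sum_A by (rule nn_integral_multc) simp
  finally show ?thesis
    using \<open>0 \<le> c\<close> by (simp add: emeasure_eq_measure ennreal_mult'[symmetric] mult.commute)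
qed

lemma first_hitting_disjoint:
  fixes P :: "nat \<Rightarrow> 'a \<Rightarrow> bool"
  shows "disjoint_family (\<lambda>k. {x \<in> S. P k x \<and> (\<forall>i<k. \<not> P i x)})"
  unfolding disjoint_family_on_def
proof (intro ballI impI)
  fix m n :: nat assume "m \<noteq> n"
  then consider "m < n" | "n < m" by linarith
  then show "{x \<in> S. P m x \<and> (\<forall>i<m. \<not> P i x)} \<inter> {x \<in> S. P n x \<and> (\<forall>i<n. \<not> P i x)} = {}"
    by cases auto
qed

lemma first_hitting_Union:
  fixes P :: "nat \<Rightarrow> 'a \<Rightarrow> bool"
  shows "(\<Union>k. {x \<in> S. P k x \<and> (\<forall>i<k. \<not> P i x)}) = {x \<in> S. \<exists>k. P k x}"
proof (intro set_eqI iffI)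
  fix x assume "x \<in> {x \<in> S. \<exists>k. P k x}"
  then obtain k where "x \<in> S" "P k x" "\<forall>i<k. \<not> P i x"
    using exists_least_iff[of "\<lambda>k. P k x"] by auto
  then show "x \<in> (\<Union>k. {x \<in> S. P k x \<and> (\<forall>i<k. \<not> P i x)})" by blast
qed blast

section \<open>Conditional expectations along a filtration\<close>

locale filtered_prob_space =
  fixes M :: "'a measure" and F :: "nat \<Rightarrow> 'a measure"
  assumes prob_space: "prob_space M"
    and filtration: "is_filtration M F"
begin

sublocale prob_space M by (rule prob_space)

lemma subalgebra_F: "subalgebra M (F k)"
  using filtration unfolding is_filtration_def by auto

lemma space_F [simp]: "space (F k) = space M"
  using subalgebra_F unfolding subalgebra_def by auto

lemma sets_F_imp_sets: "A \<in> sets (F k) \<Longrightarrow> A \<in> sets M"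
  using subalgebra_F unfolding subalgebra_def by auto

lemma sets_F_mono: "i \<le> k \<Longrightarrow> sets (F i) \<subseteq> sets (F k)"
proof (induction k)
  case (Suc k)
  have "sets (F k) \<subseteq> sets (F (Suc k))" using filtration unfolding is_filtration_def by auto
  with Suc show ?case by (cases "i = Suc k") auto
qed simp

lemma in_sets_F_mono: "A \<in> sets (F i) \<Longrightarrow> i \<le> k \<Longrightarrow> A \<in> sets (F k)"
  using sets_F_mono by blast

lemma measurable_F_mono: "h \<in> borel_measurable (F i) \<Longrightarrow> i \<le> k \<Longrightarrow> h \<in> borel_measurable (F k)"
  unfolding measurable_def using sets_F_mono by auto

lemma measurable_F_imp_measurable: "h \<in> borel_measurable (F k) \<Longrightarrow> h \<in> borel_measurable M"
  by (rule measurable_from_subalg[OF subalgebra_F])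

lemma pred_sets_F: "Measurable.pred (F k) P \<Longrightarrow> {x \<in> space M. P x} \<in> sets (F k)"
  by (drule predE) simp

lemma sigma_finite_subalgebra_F: "sigma_finite_subalgebra M (F k)"
proof -
  interpret finite_measure_subalgebra M "F k"
    by unfold_locales (rule subalgebra_F)
  show ?thesis by (rule sigma_finite_subalgebra_axioms)
qed

lemma condE_measurable_F [measurable]: "condE M F k h \<in> borel_measurable (F k)"
  unfolding condE_def by simp

lemma condE_measurable [measurable]: "condE M F k h \<in> borel_measurable M"
  unfolding condE_def by simp

lemma integral_mult_condE:
  assumes "integrable M (\<lambda>x. g x * h x)" "g \<in> borel_measurable (F k)" "h \<in> borel_measurable M"
  shows "(\<integral>x. g x * condE M F k h x \<partial>M) = (\<integral>x. g x * h x \<partial>M)"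
  unfolding condE_def using sigma_finite_subalgebra.real_cond_exp_intg(2)[OF sigma_finite_subalgebra_F assms] .

lemma AE_condE_eq_self:
  assumes "integrable M h" "h \<in> borel_measurable (F k)"
  shows "AE x in M. condE M F k h x = h x"
  unfolding condE_def using sigma_finite_subalgebra.real_cond_exp_F_meas[OF sigma_finite_subalgebra_F assms] .

lemma AE_condE_mono:
  assumes "AE x in M. g x \<le> h x" "integrable M g" "integrable M h"
  shows "AE x in M. condE M F k g x \<le> condE M F k h x"
  unfolding condE_def using sigma_finite_subalgebra.real_cond_exp_mono[OF sigma_finite_subalgebra_F assms] .

lemma AE_condE_le_const:
  assumes "integrable M h" "AE x in M. h x \<le> c"
  shows "AE x in M. condE M F k h x \<le> c"
  unfolding condE_def using sigma_finite_subalgebra.real_cond_exp_le_c[OF sigma_finite_subalgebra_F assms] .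

lemma AE_condE_ge_const:
  assumes "integrable M h" "AE x in M. c \<le> h x"
  shows "AE x in M. c \<le> condE M F k h x"
  unfolding condE_def using sigma_finite_subalgebra.real_cond_exp_ge_c[OF sigma_finite_subalgebra_F assms] .

lemma integrable_indicator [simp]: "A \<in> sets M \<Longrightarrow> integrable M (indicator A :: 'a \<Rightarrow> real)"
  by (rule integrable_const_bound[where B=1]) (auto split: split_indicator)

definition ess_bounded :: "('a \<Rightarrow> real) \<Rightarrow> bool" where
  "ess_bounded h \<longleftrightarrow> h \<in> borel_measurable M \<and> (\<exists>B. AE x in M. \<bar>h x\<bar> \<le> B)"

lemma ess_boundedI: "h \<in> borel_measurable M \<Longrightarrow> AE x in M. \<bar>h x\<bar> \<le> B \<Longrightarrow> ess_bounded h"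
  unfolding ess_bounded_def by blast

lemma ess_bounded_integrable: "ess_bounded h \<Longrightarrow> integrable M h"
proof -
  assume "ess_bounded h"
  then obtain B where "h \<in> borel_measurable M" "AE x in M. \<bar>h x\<bar> \<le> B"
    unfolding ess_bounded_def by blast
  then show ?thesis by (intro integrable_const_bound[where B=B]) auto
qed

lemma ess_bounded_const [simp]: "ess_bounded (\<lambda>x. c)"
  by (rule ess_boundedI[where B="\<bar>c\<bar>"]) auto

lemma ess_bounded_indicator [simp]: "A \<in> sets M \<Longrightarrow> ess_bounded (indicator A)"
  by (rule ess_boundedI[where B=1]) (auto split: split_indicator)

lemma ess_bounded_mult: "ess_bounded g \<Longrightarrow> ess_bounded h \<Longrightarrow> ess_bounded (\<lambda>x. g x * h x)"
proof -
  assume "ess_bounded g" "ess_bounded h"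
  then obtain B1 B2 where "g \<in> borel_measurable M" "h \<in> borel_measurable M"
    and "AE x in M. \<bar>g x\<bar> \<le> B1" "AE x in M. \<bar>h x\<bar> \<le> B2" unfolding ess_bounded_def by blast
  moreover from this(3,4) have "AE x in M. \<bar>g x * h x\<bar> \<le> B1 * B2"
    by eventually_elim (auto simp: abs_mult intro!: mult_mono)
  ultimately show ?thesis by (intro ess_boundedI) auto
qed

lemma ess_bounded_add: "ess_bounded g \<Longrightarrow> ess_bounded h \<Longrightarrow> ess_bounded (\<lambda>x. g x + h x)"
proof -
  assume "ess_bounded g" "ess_bounded h"
  then obtain B1 B2 where "g \<in> borel_measurable M" "h \<in> borel_measurable M"
    and "AE x in M. \<bar>g x\<bar> \<le> B1" "AE x in M. \<bar>h x\<bar> \<le> B2" unfolding ess_bounded_def by blast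
  moreover from this(3,4) have "AE x in M. \<bar>g x + h x\<bar> \<le> B1 + B2"
    by eventually_elim auto
  ultimately show ?thesis by (intro ess_boundedI) auto
qed

lemma ess_bounded_diff: "ess_bounded g \<Longrightarrow> ess_bounded h \<Longrightarrow> ess_bounded (\<lambda>x. g x - h x)"
  using ess_bounded_add[of g "\<lambda>x. - h x"] unfolding ess_bounded_def by auto

lemma ess_bounded_sum:
  "finite I \<Longrightarrow> (\<And>i. i \<in> I \<Longrightarrow> ess_bounded (g i)) \<Longrightarrow> ess_bounded (\<lambda>x. \<Sum>i\<in>I. g i x)"
  by (induction I rule: finite_induct) (simp_all add: ess_bounded_add)

lemma ess_bounded_power2: "ess_bounded h \<Longrightarrow> ess_bounded (\<lambda>x. (h x)\<^sup>2)"
  using ess_bounded_mult[of h h] by (simp add: power2_eq_square)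

lemma ess_bounded_condE: "ess_bounded h \<Longrightarrow> ess_bounded (condE M F k h)"
proof -
  assume "ess_bounded h"
  then obtain B where B: "AE x in M. \<bar>h x\<bar> \<le> B" unfolding ess_bounded_def by blast
  have "integrable M h" using \<open>ess_bounded h\<close> ess_bounded_integrable by blast
  then have "AE x in M. condE M F k h x \<le> B" "AE x in M. -B \<le> condE M F k h x"
    by (intro AE_condE_le_const AE_condE_ge_const; use B in \<open>force simp: abs_le_iff\<close>)+
  then have "AE x in M. \<bar>condE M F k h x\<bar> \<le> B" by eventually_elim auto
  then show ?thesis by (intro ess_boundedI) auto
qed

lemma ess_bounded_if_then_0:
  assumes [measurable]: "Measurable.pred M P" and "ess_bounded g"
  shows "ess_bounded (\<lambda>x. if P x then g x else 0)"
proof -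
  obtain B where [measurable]: "g \<in> borel_measurable M" and B: "AE x in M. \<bar>g x\<bar> \<le> B"
    using assms(2) unfolding ess_bounded_def by blast
  from B have "AE x in M. \<bar>if P x then g x else 0\<bar> \<le> max B 0" by eventually_elim auto
  then show ?thesis by (intro ess_boundedI) measurable
qed

lemma integral_indicator_mult_condE_indicator:
  assumes "C \<in> sets (F k)" "B \<in> sets M"
  shows "(\<integral>x. indicator C x * condE M F k (indicator B) x \<partial>M) = measure M (C \<inter> B)"
proof -
  have "C \<in> sets M" using sets_F_imp_sets[OF assms(1)] .
  then have "(\<integral>x. indicator C x * condE M F k (indicator B) x \<partial>M) = (\<integral>x. indicator C x * indicator B x \<partial>M)"
    using assms by (intro integral_mult_condE ess_bounded_integrable ess_bounded_mult) auto
  also have "(\<lambda>x. indicator C x * indicator B x :: real) = indicator (C \<inter> B)"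
    by (auto split: split_indicator)
  finally show ?thesis using \<open>C \<in> sets M\<close> assms(2) by simp
qed

lemma stopped_sets_Int_eq_sets_F:
  assumes "A \<in> stopped_sets M F \<nu>"
  shows "A \<inter> {x \<in> space M. \<nu> x = enat k} \<in> sets (F k)"
proof (cases k)
  case 0
  then have "A \<inter> {x \<in> space M. \<nu> x = enat k} = A \<inter> {x \<in> space M. \<nu> x \<le> enat 0}"
    by (auto simp: enat_0)
  then show ?thesis using assms 0 unfolding stopped_sets_def by auto
next
  case (Suc j)
  have "\<nu> x \<le> enat (Suc j) \<and> \<not> \<nu> x \<le> enat j \<longleftrightarrow> \<nu> x = enat (Suc j)" for x
    by (cases "\<nu> x") auto
  then have "A \<inter> {x \<in> space M. \<nu> x = enat k}
      = (A \<inter> {x \<in> space M. \<nu> x \<le> enat k}) - (A \<inter> {x \<in> space M. \<nu> x \<le> enat j})"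
    using Suc by blast
  moreover have "A \<inter> {x \<in> space M. \<nu> x \<le> enat j} \<in> sets (F k)"
    using assms Suc unfolding stopped_sets_def by (auto intro: in_sets_F_mono)
  ultimately show ?thesis using assms unfolding stopped_sets_def by auto
qed

lemma stopping_time_imp_stopped_sets_space: "stopping_time_F M F \<nu> \<Longrightarrow> space M \<in> stopped_sets M F \<nu>"
  unfolding stopping_time_F_def stopped_sets_def by (simp add: Int_absorb1)

lemma stopping_time_eq_sets_F:
  "stopping_time_F M F \<nu> \<Longrightarrow> {x \<in> space M. \<nu> x = enat k} \<in> sets (F k)"
  using stopped_sets_Int_eq_sets_F[OF stopping_time_imp_stopped_sets_space] by (simp add: Int_absorb1)

lemma stopping_time_measurable:
  assumes "stopping_time_F M F \<nu>"
  shows "\<nu> \<in> measurable M (count_space UNIV)"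
  unfolding measurable_count_space_eq2_countable
proof (intro conjI ballI)
  fix e :: enat
  have fin: "{x \<in> space M. \<nu> x = enat k} \<in> sets M" for k
    using sets_F_imp_sets[OF stopping_time_eq_sets_F[OF assms]] .
  show "\<nu> -` {e} \<inter> space M \<in> sets M"
  proof (cases e)
    case (enat k)
    then show ?thesis using fin[of k] by (simp add: vimage_def Int_def conj_commute)
  next
    case infinity
    then have "\<nu> -` {e} \<inter> space M = space M - (\<Union>k. {x \<in> space M. \<nu> x = enat k})"
      by (auto simp: not_infinity_eq)
    then show ?thesis using fin by auto
  qed
qed auto

lemma stopping_time_ge_sets_F:
  assumes "stopping_time_F M F \<tau>" "0 < i"
  shows "{x \<in> space M. enat i \<le> \<tau> x} \<in> sets (F (i - 1))"
proof -
  have "enat i \<le> N \<longleftrightarrow> \<not> N \<le> enat (i - 1)" for N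
    using assms(2) by (cases N) auto
  then have "{x \<in> space M. enat i \<le> \<tau> x} = space M - {x \<in> space M. \<tau> x \<le> enat (i - 1)}"
    by auto
  also have "\<dots> \<in> sets (F (i - 1))"
    using assms(1) unfolding stopping_time_F_def by (metis sets.compl_sets space_F)
  finally show ?thesis .
qed

lemma measure_Int_le_if_AE_condE_le:
  assumes A: "A \<in> sets (F k)" and C: "C \<in> sets M"
    and le: "AE x in M. x \<in> A \<longrightarrow> condE M F k (indicator C) x \<le> c"
  shows "measure M (A \<inter> C) \<le> c * measure M A"
proof -
  have AM: "A \<in> sets M" using sets_F_imp_sets[OF A] .
  have "measure M (A \<inter> C) = (\<integral>x. indicator A x * condE M F k (indicator C) x \<partial>M)"
    by (rule integral_indicator_mult_condE_indicator[OF A C, symmetric])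
  also have "\<dots> \<le> (\<integral>x. indicator A x * c \<partial>M)"
  proof (rule integral_mono_AE)
    show "integrable M (\<lambda>x. indicator A x * condE M F k (indicator C) x)"
      using AM C by (intro ess_bounded_integrable ess_bounded_mult ess_bounded_condE) auto
    show "AE x in M. indicator A x * condE M F k (indicator C) x \<le> indicator A x * c"
      using le by eventually_elim (auto split: split_indicator)
  qed (use AM in simp)
  also have "\<dots> = c * measure M A" using AM by simp
  finally show ?thesis .
qed

text \<open>Test against the \<open>F k\<close>-set on which the bound fails.\<close>
lemma AE_condE_indicator_le_if_measure_Int_le:
  assumes X: "X \<in> sets (F k)" and B: "B \<in> sets M"
    and le: "\<And>A. A \<in> sets (F k) \<Longrightarrow> A \<subseteq> X \<Longrightarrow> measure M (A \<inter> B) \<le> c * measure M A"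
  shows "AE x in M. x \<in> X \<longrightarrow> condE M F k (indicator B) x \<le> c"
proof -
  define h where "h = condE M F k (indicator B)"
  define A where "A = {x \<in> space M. x \<in> X \<and> c < h x}"
  have [measurable]: "X \<in> sets (F k)" "h \<in> borel_measurable (F k)"
    using X unfolding h_def by auto
  have AF: "A \<in> sets (F k)" unfolding A_def by (rule pred_sets_F) measurable
  then have AM: "A \<in> sets M" by (rule sets_F_imp_sets)
  have int: "integrable M (\<lambda>x. indicator A x * h x)"
    using AM B unfolding h_def by (intro ess_bounded_integrable ess_bounded_mult ess_bounded_condE) auto
  have "(\<integral>x. indicator A x * h x \<partial>M) - c * measure M A = (\<integral>x. indicator A x * (h x - c) \<partial>M)"
    using int AM unfolding right_diff_distrib by (subst Bochner_Integration.integral_diff) auto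
  moreover have "(\<integral>x. indicator A x * h x \<partial>M) \<le> c * measure M A"
    using integral_indicator_mult_condE_indicator[OF AF B] le[OF AF] unfolding h_def A_def by auto
  moreover have nonneg: "AE x in M. 0 \<le> indicator A x * (h x - c)"
    by (auto simp: A_def split: split_indicator)
  ultimately have "(\<integral>x. indicator A x * (h x - c) \<partial>M) = 0"
    using integral_nonneg_AE[OF nonneg] by linarith
  moreover have "integrable M (\<lambda>x. indicator A x * (h x - c))"
    using AM B unfolding h_def
    by (intro ess_bounded_integrable ess_bounded_mult ess_bounded_diff ess_bounded_condE) auto
  ultimately have "AE x in M. indicator A x * (h x - c) = 0"
    using integral_nonneg_eq_0_iff_AE[OF _ nonneg] by blast
  with AE_space show ?thesis
    by eventually_elim (auto simp: A_def h_def indicator_def split: if_splits)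
qed

lemma AE_condE_indicator_le_if_covered:
  assumes X: "X \<in> sets (F k)" and B: "B \<in> sets M" and G: "\<And>n. G n \<in> sets M" "incseq G"
    and cover: "X \<inter> B \<subseteq> (\<Union>n. G n)"
    and G_le: "\<And>n. AE x in M. x \<in> X \<longrightarrow> condE M F k (indicator (G n)) x \<le> c"
  shows "AE x in M. x \<in> X \<longrightarrow> condE M F k (indicator B) x \<le> c"
proof (rule AE_condE_indicator_le_if_measure_Int_le[OF X B])
  fix A assume A: "A \<in> sets (F k)" "A \<subseteq> X"
  then have AM: "A \<in> sets M" by (auto intro: sets_F_imp_sets)
  have "measure M (A \<inter> G n) \<le> c * measure M A" for n
    using G_le[of n] A by (intro measure_Int_le_if_AE_condE_le G) (auto elim!: AE_mp)
  moreover have "(\<lambda>n. measure M (A \<inter> G n)) \<longlonglongrightarrow> measure M (\<Union>n. A \<inter> G n)"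
    using AM G by (intro finite_Lim_measure_incseq) (auto simp: incseq_def)
  ultimately have "measure M (\<Union>n. A \<inter> G n) \<le> c * measure M A"
    by (simp add: LIMSEQ_le_const2)
  moreover have "measure M (A \<inter> B) \<le> measure M (\<Union>n. A \<inter> G n)"
    using cover A(2) AM B G by (intro finite_measure_mono) auto
  ultimately show "measure M (A \<inter> B) \<le> c * measure M A" by linarith
qed

lemma regular_filtration_ge_1:
  assumes "regular_filtration M F R"
  shows "1 \<le> R"
proof -
  have one: "AE x in M. condE M F k (\<lambda>_. 1) x = 1" for k
    by (rule AE_condE_eq_self) auto
  have "AE x in M. condE M F 1 (\<lambda>_. 1) x \<le> R * condE M F 0 (\<lambda>_. 1) x"
    using assms unfolding regular_filtration_def by (metis diff_self_eq_0 integrable_const order_refl zero_le_one)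
  with one[of 1] one[of 0] have "AE x in M. 1 \<le> R" by eventually_elim auto
  then show ?thesis by simp
qed

text \<open>Doob's maximal inequality for \<open>E\<^sub>k 1\<^sub>B\<close>, split according to the first time the level \<open>c\<close>
  is exceeded.\<close>
lemma measure_exceed_condE_indicator_le:
  assumes A: "A \<in> sets (F k0)" and B: "B \<in> sets M" and "0 \<le> c"
  shows "c * measure M (A \<inter> {x \<in> space M. \<exists>k>k0. c < condE M F k (indicator B) x}) \<le> measure M (A \<inter> B)"
proof -
  have AM: "A \<in> sets M" using sets_F_imp_sets[OF A] .
  define h where "h k = condE M F k (indicator B)" for k
  define P where "P k x \<longleftrightarrow> k0 < k \<and> c < h k x" for k x
  define D where "D k = {x \<in> A. P k x \<and> (\<forall>i<k. \<not> P i x)}" for k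
  have DF: "D k \<in> sets (F k)" for k
  proof (cases "k0 < k")
    case True
    have [measurable]: "h i \<in> borel_measurable (F k)" if "i \<le> k" for i
      using measurable_F_mono[OF condE_measurable_F that] unfolding h_def .
    have "{x \<in> space M. P k x \<and> (\<forall>i<k. \<not> P i x)} \<in> sets (F k)"
      unfolding P_def by (intro pred_sets_F) measurable
    moreover have "D k = A \<inter> {x \<in> space M. P k x \<and> (\<forall>i<k. \<not> P i x)}"
      using sets.sets_into_space[OF AM] unfolding D_def by auto
    ultimately show ?thesis using in_sets_F_mono[OF A] True by auto
  qed (simp add: D_def P_def)
  then have DM: "D k \<in> sets M" for k by (rule sets_F_imp_sets)
  have "c * measure M (D k) \<le> measure M (D k \<inter> B)" for k
  proof -
    have "c * measure M (D k) = (\<integral>x. indicator (D k) x * c \<partial>M)" using DM[of k] by simp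
    also have "\<dots> \<le> (\<integral>x. indicator (D k) x * h k x \<partial>M)"
    proof (rule integral_mono)
      show "integrable M (\<lambda>x. indicator (D k) x * c)" using DM[of k] by simp
      show "integrable M (\<lambda>x. indicator (D k) x * h k x)"
        unfolding h_def using DM[of k] B by (intro ess_bounded_integrable ess_bounded_mult ess_bounded_condE) auto
      show "indicator (D k) x * c \<le> indicator (D k) x * h k x" for x
        by (auto simp: D_def P_def split: split_indicator)
    qed
    also have "\<dots> = measure M (D k \<inter> B)"
      unfolding h_def by (rule integral_indicator_mult_condE_indicator[OF DF B])
    finally show ?thesis .
  qed
  moreover have "(\<lambda>k. c * measure M (D k)) sums (c * measure M (\<Union>k. D k))"
    using DM first_hitting_disjoint[of A P] unfolding D_def by (intro sums_mult finite_measure_UNION) auto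
  moreover have "(\<lambda>k. measure M (D k \<inter> B)) sums (measure M (\<Union>k. D k \<inter> B))"
    using DM B first_hitting_disjoint[of A P] unfolding D_def
    by (intro finite_measure_UNION) (auto simp: disjoint_family_on_def)
  ultimately have "c * measure M (\<Union>k. D k) \<le> measure M (\<Union>k. D k \<inter> B)"
    by (rule sums_le)
  also have "\<dots> \<le> measure M (A \<inter> B)"
    using AM B by (intro finite_measure_mono) (auto simp: D_def)
  also have "(\<Union>k. D k) = {x \<in> A. \<exists>k. P k x}"
    unfolding D_def by (rule first_hitting_Union)
  also have "\<dots> = A \<inter> {x \<in> space M. \<exists>k>k0. c < condE M F k (indicator B) x}"
    using sets.sets_into_space[OF AM] by (auto simp: P_def h_def)
  finally show ?thesis .
qed

end

section \<open>Martingale transforms\<close>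

locale martingale_transform = filtered_prob_space M F
  for M :: "'a measure" and F :: "nat \<Rightarrow> 'a measure" +
  fixes R r :: real and \<sigma> :: "nat \<Rightarrow> 'a \<Rightarrow> real" and f :: "'a \<Rightarrow> real"
  assumes regular: "regular_filtration M F R"
    and r_def: "r = 1 / (2 * (R + 3))"
    and predictable: "predictable_bounded M F \<sigma>"
    and f_measurable [measurable]: "f \<in> borel_measurable M"
    and f_bounded: "\<exists>B. \<forall>x\<in>space M. \<bar>f x\<bar> \<le> B"
begin

abbreviation Ef :: "nat \<Rightarrow> 'a \<Rightarrow> real" where "Ef k \<equiv> condE M F k f"

abbreviation df :: "nat \<Rightarrow> 'a \<Rightarrow> real" where "df \<equiv> mdiff M F f"

definition Tf :: "nat \<Rightarrow> 'a \<Rightarrow> real" where "Tf l x = (\<Sum>k\<le>l. \<sigma> k x * df k x)"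

lemma f_ess_bounded: "ess_bounded f"
  using f_bounded by (auto intro!: ess_boundedI)

lemma Ef_ess_bounded: "ess_bounded (Ef k)"
  using ess_bounded_condE[OF f_ess_bounded] .

lemma mdiff_0: "df 0 x = Ef 0 x"
  unfolding mdiff_def by simp

lemma mdiff_pos: "0 < k \<Longrightarrow> df k x = Ef k x - Ef (k - 1) x"
  unfolding mdiff_def by simp

lemma mdiff_Suc: "df (Suc k) x = Ef (Suc k) x - Ef k x"
  by (simp add: mdiff_pos)

lemma mdiff_measurable_F [measurable]: "df k \<in> borel_measurable (F k)"
proof -
  have "Ef (k - 1) \<in> borel_measurable (F k)"
    using measurable_F_mono[OF condE_measurable_F] by simp
  then show ?thesis unfolding mdiff_def[abs_def] by (cases k) simp_all
qed

lemma mdiff_ess_bounded: "ess_bounded (df k)"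
  by (cases k) (simp_all add: mdiff_0[abs_def] mdiff_Suc[abs_def] Ef_ess_bounded ess_bounded_diff)

lemma sigma_measurable_F: "k \<le> l + 1 \<Longrightarrow> \<sigma> k \<in> borel_measurable (F l)"
  using predictable measurable_F_mono[of "\<sigma> k" "k - 1" l]
  unfolding predictable_bounded_def by auto

lemma AE_abs_sigma_le_1: "AE x in M. \<forall>k. \<bar>\<sigma> k x\<bar> \<le> 1"
  unfolding AE_all_countable using predictable unfolding predictable_bounded_def by auto

lemma sigma_ess_bounded: "ess_bounded (\<sigma> k)"
  using predictable measurable_F_imp_measurable[OF sigma_measurable_F[of k "k - 1"]]
  unfolding predictable_bounded_def by (auto intro!: ess_boundedI)

lemma Tf_measurable_F: "Tf l \<in> borel_measurable (F l)"
  unfolding Tf_def[abs_def]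
  using sigma_measurable_F measurable_F_mono[OF mdiff_measurable_F] by measurable

lemma Tf_measurable [measurable]: "Tf l \<in> borel_measurable M"
  using measurable_F_imp_measurable[OF Tf_measurable_F] .

lemma Tf_Suc: "Tf (Suc k) x = Tf k x + \<sigma> (Suc k) x * df (Suc k) x"
  unfolding Tf_def by simp

lemma R_ge_1: "1 \<le> R"
  using regular by (rule regular_filtration_ge_1)

lemma integral_mult_mdiff_Suc_eq_0:
  assumes "W \<in> borel_measurable (F n)" "ess_bounded W"
  shows "(\<integral>x. W x * df (Suc n) x \<partial>M) = 0"
proof -
  have int: "integrable M (\<lambda>x. W x * f x)" "integrable M (\<lambda>x. W x * Ef k x)" for k
    using assms(2) f_ess_bounded Ef_ess_bounded by (auto intro: ess_bounded_integrable ess_bounded_mult)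
  have "(\<integral>x. W x * df (Suc n) x \<partial>M) = (\<integral>x. W x * Ef (Suc n) x \<partial>M) - (\<integral>x. W x * Ef n x \<partial>M)"
    unfolding mdiff_Suc right_diff_distrib using int(2)[of "Suc n"] int(2)[of n]
    by (rule Bochner_Integration.integral_diff)
  also have "\<dots> = 0"
    using integral_mult_condE[OF int(1) measurable_F_mono[OF assms(1)]]
      integral_mult_condE[OF int(1) assms(1)] by simp
  finally show ?thesis .
qed

lemma integral_square_sum_predictable:
  assumes b_measurable: "\<And>i. b i \<in> borel_measurable (F (i - 1))" and b_bounded: "\<And>i. ess_bounded (b i)"
  shows "(\<integral>x. (\<Sum>i\<in>{k0<..n}. b i x * df i x)\<^sup>2 \<partial>M) = (\<Sum>i\<in>{k0<..n}. \<integral>x. (b i x)\<^sup>2 * (df i x)\<^sup>2 \<partial>M)"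
proof (induction n)
  case (Suc n)
  show ?case
  proof (cases "k0 < Suc n")
    case True
    define S where "S x = (\<Sum>i\<in>{k0<..n}. b i x * df i x)" for x
    have insert: "{k0<..Suc n} = insert (Suc n) {k0<..n}" using True by auto
    have S_bounded: "ess_bounded S" unfolding S_def[abs_def]
      by (intro ess_bounded_sum ess_bounded_mult b_bounded mdiff_ess_bounded) auto
    have "S \<in> borel_measurable (F n)" unfolding S_def[abs_def]
    proof (intro borel_measurable_sum borel_measurable_times)
      fix i assume "i \<in> {k0<..n}"
      then show "b i \<in> borel_measurable (F n)" "df i \<in> borel_measurable (F n)"
        using measurable_F_mono[OF b_measurable[of i]] measurable_F_mono[OF mdiff_measurable_F[of i]] by auto
    qed
    then have cross: "(\<integral>x. (S x * b (Suc n) x) * df (Suc n) x \<partial>M) = 0"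
      using b_measurable[of "Suc n"] ess_bounded_mult[OF S_bounded b_bounded]
      by (intro integral_mult_mdiff_Suc_eq_0) auto
    have "(\<Sum>i\<in>{k0<..Suc n}. b i x * df i x)\<^sup>2
        = (S x)\<^sup>2 + 2 * ((S x * b (Suc n) x) * df (Suc n) x) + (b (Suc n) x)\<^sup>2 * (df (Suc n) x)\<^sup>2" for x
      unfolding insert S_def by (simp add: power2_eq_square algebra_simps)
    moreover have "integrable M (\<lambda>x. (S x)\<^sup>2)"
      "integrable M (\<lambda>x. 2 * ((S x * b (Suc n) x) * df (Suc n) x))"
      "integrable M (\<lambda>x. (b (Suc n) x)\<^sup>2 * (df (Suc n) x)\<^sup>2)"
      by (intro ess_bounded_integrable ess_bounded_mult ess_bounded_power2 ess_bounded_const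
          S_bounded b_bounded mdiff_ess_bounded)+
    ultimately have "(\<integral>x. (\<Sum>i\<in>{k0<..Suc n}. b i x * df i x)\<^sup>2 \<partial>M)
        = (\<integral>x. (S x)\<^sup>2 \<partial>M) + (\<integral>x. (b (Suc n) x)\<^sup>2 * (df (Suc n) x)\<^sup>2 \<partial>M)"
      using cross by simp
    then show ?thesis unfolding insert using Suc.IH unfolding S_def by simp
  qed simp
qed simp

lemma sum_mdiff_telescope: "k0 \<le> n \<Longrightarrow> (\<Sum>i\<in>{k0<..n}. df i x) = Ef n x - Ef k0 x"
proof (induction n)
  case (Suc n)
  then have "k0 = Suc n \<or> k0 \<le> n \<and> {k0<..Suc n} = insert (Suc n) {k0<..n}" by auto
  with Suc.IH show ?case by (auto simp: mdiff_Suc)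
qed simp

lemma Tf_diff_eq_sum: "k0 \<le> n \<Longrightarrow> Tf n x - Tf k0 x = (\<Sum>i\<in>{k0<..n}. \<sigma> i x * df i x)"
proof (induction n)
  case (Suc n)
  then have "k0 = Suc n \<or> k0 \<le> n \<and> {k0<..Suc n} = insert (Suc n) {k0<..n}" by auto
  with Suc.IH show ?case by (auto simp: Tf_Suc)
qed simp

definition theta :: real where "theta = 1 / (R + 1)"

definition K :: real where "K = 2 * (R + 3)"

lemma r_pos: "0 < r" and r_less_1: "r < 1" and theta_pos: "0 < theta" and K_pos: "0 < K"
  and r_le_theta: "r \<le> theta" and R_mult_theta_less_1: "R * theta < 1"
  using R_ge_1 by (auto simp: r_def theta_def K_def field_simps)

lemma r_div_theta_add_le_half: "r / theta + 4 / K\<^sup>2 \<le> 1 / 2"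
proof -
  have "r / theta = (R + 1) / (2 * (R + 3))"
    using R_ge_1 by (simp add: r_def theta_def field_simps)
  moreover have "4 / K\<^sup>2 = 1 / (R + 3) / (R + 3)"
    using R_ge_1 by (simp add: K_def power2_eq_square divide_simps) (simp add: algebra_simps)
  ultimately have "r / theta + 4 / K\<^sup>2 = (R + 1) / (2 * (R + 3)) + 1 / (R + 3) / (R + 3)"
    by simp
  also have "\<dots> \<le> (R + 1) / (2 * (R + 3)) + 2 / (2 * (R + 3))"
  proof -
    have "1 / (R + 3) / (R + 3) \<le> 1 / (R + 3)"
      using R_ge_1 by (simp add: divide_le_eq)
    also have "\<dots> = 2 / (2 * (R + 3))"
      by (metis mult_divide_mult_cancel_left_if mult_1_right zero_neq_numeral)
    finally show ?thesis by simp
  qed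
  also have "\<dots> = 1 / 2"
    using R_ge_1 by (simp add: add_divide_distrib[symmetric])
  finally show ?thesis .
qed

section \<open>The stopping rule\<close>

abbreviation Mf :: "('a \<Rightarrow> enat) \<Rightarrow> 'a \<Rightarrow> ereal" where "Mf \<nu> \<equiv> maxop_stop M F \<nu> f"

definition superlevel :: "('a \<Rightarrow> enat) \<Rightarrow> real \<Rightarrow> 'a set" where
  "superlevel \<nu> t = {y \<in> space M. ereal t < Mf \<nu> y}"

text \<open>A dyadic substitute for \<open>P\<^sup>r\<^sub>k (M\<^sub>(\<^sub>\<nu>\<^sub>) f)\<close>: it is \<open>F k\<close>-measurable, takes only the
  countably many values \<open>0\<close>, \<open>\<infinity>\<close> and \<open>2\<^sup>m\<close>, and is at most twice \<open>P\<^sup>r\<^sub>k (M\<^sub>(\<^sub>\<nu>\<^sub>) f)\<close>.\<close>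

definition good_exponents :: "('a \<Rightarrow> enat) \<Rightarrow> nat \<Rightarrow> 'a \<Rightarrow> int set" where
  "good_exponents \<nu> k x =
     {m. \<forall>m'\<ge>m. condE M F k (indicator (superlevel \<nu> (2 powr real_of_int m'))) x \<le> r}"

definition dyadic_P :: "('a \<Rightarrow> enat) \<Rightarrow> nat \<Rightarrow> 'a \<Rightarrow> ereal" where
  "dyadic_P \<nu> k x = (INF m\<in>good_exponents \<nu> k x. ereal (2 powr real_of_int m))"

definition bad_set :: "('a \<Rightarrow> enat) \<Rightarrow> 'a set" where
  "bad_set \<nu> = {y \<in> space M. \<exists>k. \<nu> y = enat k \<and> dyadic_P \<nu> k y < Mf \<nu> y}"

definition stop_cond :: "('a \<Rightarrow> enat) \<Rightarrow> nat \<Rightarrow> nat \<Rightarrow> 'a \<Rightarrow> bool" where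
  "stop_cond \<nu> k0 k x \<longleftrightarrow>
     theta < condE M F k (indicator (bad_set \<nu>)) x \<or> ereal K * dyadic_P \<nu> k0 x < ereal \<bar>Tf k x - Tf k0 x\<bar>"

definition next_stop :: "('a \<Rightarrow> enat) \<Rightarrow> 'a \<Rightarrow> enat" where
  "next_stop \<nu> x = (case \<nu> x of \<infinity> \<Rightarrow> \<infinity> | enat k0 \<Rightarrow>
      (if \<exists>k>k0. stop_cond \<nu> k0 k x then enat (LEAST k. k0 < k \<and> stop_cond \<nu> k0 k x) else \<infinity>))"

lemma good_exponents_mono: "m \<in> good_exponents \<nu> k x \<Longrightarrow> m \<le> m' \<Longrightarrow> m' \<in> good_exponents \<nu> k x"
  unfolding good_exponents_def by auto

lemma dyadic_P_nonneg: "0 \<le> dyadic_P \<nu> k x"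
  unfolding dyadic_P_def by (rule INF_greatest) simp

lemma dyadic_P_empty: "good_exponents \<nu> k x = {} \<Longrightarrow> dyadic_P \<nu> k x = \<infinity>"
  unfolding dyadic_P_def by (simp add: top_ereal_def)

lemma dyadic_P_UNIV: "good_exponents \<nu> k x = UNIV \<Longrightarrow> dyadic_P \<nu> k x = 0"
  unfolding dyadic_P_def using INF_powr_two_int by simp

lemma dyadic_P_eq_powr:
  assumes "m \<in> good_exponents \<nu> k x" "m - 1 \<notin> good_exponents \<nu> k x"
  shows "dyadic_P \<nu> k x = ereal (2 powr real_of_int m)"
  unfolding dyadic_P_def
proof (rule antisym)
  show "(INF m\<in>good_exponents \<nu> k x. ereal (2 powr real_of_int m)) \<le> ereal (2 powr real_of_int m)"
    using assms(1) by (rule INF_lower)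
  have "m \<le> q" if "q \<in> good_exponents \<nu> k x" for q
    using good_exponents_mono[OF that, of "m - 1"] assms(2) by force
  then show "ereal (2 powr real_of_int m) \<le> (INF m\<in>good_exponents \<nu> k x. ereal (2 powr real_of_int m))"
    by (auto intro: INF_greatest)
qed

lemma good_exponents_cases:
  obtains "good_exponents \<nu> k x = {}" | "good_exponents \<nu> k x = UNIV"
  | m where "m \<in> good_exponents \<nu> k x" "m - 1 \<notin> good_exponents \<nu> k x"
proof -
  consider "good_exponents \<nu> k x = {}" | "good_exponents \<nu> k x = UNIV"
    | q p where "q \<in> good_exponents \<nu> k x" "p \<notin> good_exponents \<nu> k x" by blast
  then show ?thesis
  proof cases
    case (3 q p)
    then have "p < q" using good_exponents_mono[of q \<nu> k x p] by force
    then have "\<exists>n::nat. q - int n \<notin> good_exponents \<nu> k x"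
      using 3 by (intro exI[of _ "nat (q - p)"]) simp
    then obtain n where n: "q - int n \<notin> good_exponents \<nu> k x" "\<forall>i<n. q - int i \<in> good_exponents \<nu> k x"
      by (subst (asm) exists_least_iff) blast
    moreover from n(1) 3(1) obtain i where "n = Suc i" by (cases n) auto
    ultimately show ?thesis by (intro that(3)[of "q - int i"]) (auto simp: algebra_simps)
  qed (use that in auto)
qed

lemma Mf_measurable:
  assumes "stopping_time_F M F \<nu>"
  shows "Mf \<nu> \<in> borel_measurable M"
proof -
  have [measurable]: "\<nu> \<in> measurable M (count_space UNIV)"
    using assms by (rule stopping_time_measurable)
  have eq: "Mf \<nu> = (\<lambda>x. SUP k. if \<nu> x \<le> enat k then ereal \<bar>Ef k x\<bar> else bot)"
    unfolding maxop_stop_def SUP_Collect_eq_SUP_if ..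
  show ?thesis unfolding eq by measurable
qed

lemma superlevel_sets: "stopping_time_F M F \<nu> \<Longrightarrow> superlevel \<nu> t \<in> sets M"
  using Mf_measurable unfolding superlevel_def by measurable

lemma good_exponents_pred [measurable]: "Measurable.pred (F k) (\<lambda>x. m \<in> good_exponents \<nu> k x)"
  unfolding good_exponents_def by measurable

lemma dyadic_P_measurable_F [measurable]: "dyadic_P \<nu> k \<in> borel_measurable (F k)"
proof -
  have eq: "dyadic_P \<nu> k = (\<lambda>x. INF m. if m \<in> good_exponents \<nu> k x then ereal (2 powr real_of_int m) else top)"
    unfolding dyadic_P_def INF_Collect_eq_INF_if[symmetric] by simp
  show ?thesis unfolding eq by measurable
qed

lemma dyadic_P_measurable [measurable]: "dyadic_P \<nu> k \<in> borel_measurable M"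
  using measurable_F_imp_measurable[OF dyadic_P_measurable_F] .

lemma bad_set_sets: "stopping_time_F M F \<nu> \<Longrightarrow> bad_set \<nu> \<in> sets M"
  using stopping_time_measurable Mf_measurable unfolding bad_set_def by measurable

lemma stop_cond_sets_F:
  assumes "k0 \<le> k"
  shows "{x \<in> space M. stop_cond \<nu> k0 k x} \<in> sets (F k)"
proof -
  have [measurable]: "dyadic_P \<nu> k0 \<in> borel_measurable (F k)" "Tf k0 \<in> borel_measurable (F k)"
    "Tf k \<in> borel_measurable (F k)"
    using measurable_F_mono[OF dyadic_P_measurable_F assms] measurable_F_mono[OF Tf_measurable_F assms]
      Tf_measurable_F by auto
  show ?thesis unfolding stop_cond_def by (intro pred_sets_F) measurable
qed

lemma next_stop_le_iff:
  assumes "\<nu> x = enat k0"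
  shows "next_stop \<nu> x \<le> enat k \<longleftrightarrow> (\<exists>i. k0 < i \<and> i \<le> k \<and> stop_cond \<nu> k0 i x)"
proof
  assume le: "next_stop \<nu> x \<le> enat k"
  then have ex: "\<exists>i>k0. stop_cond \<nu> k0 i x"
    using assms unfolding next_stop_def by (auto split: if_splits)
  define i where "i = (LEAST i. k0 < i \<and> stop_cond \<nu> k0 i x)"
  have "k0 < i \<and> stop_cond \<nu> k0 i x"
    unfolding i_def using ex by (rule LeastI_ex)
  moreover have "i \<le> k"
    using le ex assms unfolding next_stop_def i_def by simp
  ultimately show "\<exists>i. k0 < i \<and> i \<le> k \<and> stop_cond \<nu> k0 i x" by blast
next
  assume "\<exists>i. k0 < i \<and> i \<le> k \<and> stop_cond \<nu> k0 i x"
  then obtain i where "k0 < i" "i \<le> k" "stop_cond \<nu> k0 i x" by blast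
  moreover from this have "(LEAST i. k0 < i \<and> stop_cond \<nu> k0 i x) \<le> i" by (intro Least_le) auto
  ultimately show "next_stop \<nu> x \<le> enat k" using assms unfolding next_stop_def by auto
qed

lemma stopping_time_next_stop:
  assumes "stopping_time_F M F \<nu>"
  shows "stopping_time_F M F (next_stop \<nu>)"
  unfolding stopping_time_F_def
proof
  fix k
  have "{x \<in> space M. next_stop \<nu> x \<le> enat k} =
     (\<Union>k0\<in>{..k}. \<Union>i\<in>{k0<..k}. {x \<in> space M. \<nu> x = enat k0} \<inter> {x \<in> space M. stop_cond \<nu> k0 i x})"
  proof (intro set_eqI iffI)
    fix x assume x: "x \<in> {x \<in> space M. next_stop \<nu> x \<le> enat k}"
    then obtain k0 where "\<nu> x = enat k0" unfolding next_stop_def by (cases "\<nu> x") auto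
    with x next_stop_le_iff show "x \<in> (\<Union>k0\<in>{..k}. \<Union>i\<in>{k0<..k}. {x \<in> space M. \<nu> x = enat k0} \<inter> {x \<in> space M. stop_cond \<nu> k0 i x})"
      by fastforce
  qed (use next_stop_le_iff in auto)
  also have "\<dots> \<in> sets (F k)"
    using in_sets_F_mono[OF stopping_time_eq_sets_F[OF assms]] in_sets_F_mono[OF stop_cond_sets_F]
    by (intro sets.finite_UN sets.Int) auto
  finally show "{x \<in> space M. next_stop \<nu> x \<le> enat k} \<in> sets (F k)" .
qed

lemma next_stop_ge: "\<nu> x \<le> next_stop \<nu> x"
  unfolding next_stop_def by (cases "\<nu> x") (auto simp: Suc_le_eq intro: LeastI2_ex)

lemma next_stop_gt: "\<nu> x = enat a \<Longrightarrow> next_stop \<nu> x = enat b \<Longrightarrow> a < b"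
  unfolding next_stop_def by (auto split: if_splits intro: LeastI2_ex)

lemma stop_cond_next_stop: "\<nu> x = enat a \<Longrightarrow> next_stop \<nu> x = enat b \<Longrightarrow> stop_cond \<nu> a b x"
  unfolding next_stop_def by (auto split: if_splits intro: LeastI2_ex)

lemma not_stop_cond_before_next_stop:
  "\<nu> x = enat a \<Longrightarrow> a < i \<Longrightarrow> enat i < next_stop \<nu> x \<Longrightarrow> \<not> stop_cond \<nu> a i x"
  unfolding next_stop_def by (auto split: if_splits dest: not_less_Least)

lemma superlevel_antimono: "t \<le> t' \<Longrightarrow> superlevel \<nu> t' \<subseteq> superlevel \<nu> t"
  unfolding superlevel_def by (auto, metis ereal_less_eq(3) le_less_trans)

lemma abs_Ef_le_Mf: "\<nu> x \<le> enat k \<Longrightarrow> ereal \<bar>Ef k x\<bar> \<le> Mf \<nu> x"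
  unfolding maxop_stop_def by (rule SUP_upper) simp

lemma AE_condE_indicator_empty_le_r: "AE x in M. condE M F k (indicator {}) x \<le> r"
proof -
  have "AE x in M. condE M F k (\<lambda>_. 0) x = 0" by (rule AE_condE_eq_self) auto
  then show ?thesis using r_pos by (auto simp: indicator_def[abs_def] elim: AE_mp)
qed

lemma AE_condE_bad_set_le_r_if_covered:
  assumes \<nu>: "stopping_time_F M F \<nu>" and [measurable]: "Measurable.pred (F k0) P"
    and G: "\<And>n. G n \<in> sets M" "incseq G"
    and cover: "\<And>x. \<nu> x = enat k0 \<Longrightarrow> P x \<Longrightarrow> x \<in> bad_set \<nu> \<Longrightarrow> x \<in> (\<Union>n. G n)"
    and G_le: "\<And>n. AE x in M. \<nu> x = enat k0 \<and> P x \<longrightarrow> condE M F k0 (indicator (G n)) x \<le> r"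
  shows "AE x in M. \<nu> x = enat k0 \<and> P x \<longrightarrow> condE M F k0 (indicator (bad_set \<nu>)) x \<le> r"
proof -
  have "{x \<in> space M. \<nu> x = enat k0 \<and> P x} = {x \<in> space M. \<nu> x = enat k0} \<inter> {x \<in> space M. P x}"
    by auto
  then have "{x \<in> space M. \<nu> x = enat k0 \<and> P x} \<in> sets (F k0)"
    using stopping_time_eq_sets_F[OF \<nu>, of k0] pred_sets_F[OF assms(2)] by simp
  then have "AE x in M. x \<in> {x \<in> space M. \<nu> x = enat k0 \<and> P x} \<longrightarrow>
      condE M F k0 (indicator (bad_set \<nu>)) x \<le> r"
    by (rule AE_condE_indicator_le_if_covered[OF _ bad_set_sets[OF \<nu>] G])
      (use cover G_le in \<open>auto elim: AE_mp\<close>)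
  with AE_space show ?thesis by eventually_elim auto
qed

text \<open>In each of the three shapes of \<open>good_exponents\<close>, the bad set is covered by superlevel sets
  at good dyadic levels.\<close>
lemma AE_condE_bad_set_le_r:
  assumes \<nu>: "stopping_time_F M F \<nu>"
  shows "AE x in M. \<nu> x = enat k0 \<longrightarrow> condE M F k0 (indicator (bad_set \<nu>)) x \<le> r"
proof -
  let ?good = "good_exponents \<nu> k0"
  have empty: "AE x in M. \<nu> x = enat k0 \<and> (\<forall>m. m \<notin> ?good x) \<longrightarrow>
      condE M F k0 (indicator (bad_set \<nu>)) x \<le> r"
  proof (rule AE_condE_bad_set_le_r_if_covered[OF \<nu>, where G="\<lambda>_. {}"])
    show "AE x in M. \<nu> x = enat k0 \<and> (\<forall>m. m \<notin> ?good x) \<longrightarrow> condE M F k0 (indicator {}) x \<le> r"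
      using AE_condE_indicator_empty_le_r[of k0] by eventually_elim simp
    show "Measurable.pred (F k0) (\<lambda>x. \<forall>m. m \<notin> ?good x)" by measurable
  qed (auto simp: bad_set_def dyadic_P_empty)
  have all: "AE x in M. \<nu> x = enat k0 \<and> (\<forall>m. m \<in> ?good x) \<longrightarrow>
      condE M F k0 (indicator (bad_set \<nu>)) x \<le> r"
  proof (rule AE_condE_bad_set_le_r_if_covered[OF \<nu>, where G="\<lambda>n. superlevel \<nu> (2 powr real_of_int (- int n))"])
    show "incseq (\<lambda>n. superlevel \<nu> (2 powr real_of_int (- int n)))"
      by (auto simp: incseq_def intro!: superlevel_antimono)
    show "x \<in> (\<Union>n. superlevel \<nu> (2 powr real_of_int (- int n)))"
      if "\<nu> x = enat k0" "\<forall>m. m \<in> ?good x" "x \<in> bad_set \<nu>" for x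
    proof -
      have "?good x = UNIV" using that(2) by auto
      then have "0 < Mf \<nu> x" using that(1,3) dyadic_P_UNIV by (auto simp: bad_set_def)
      then show ?thesis using ex_powr_two_less that(3) by (auto simp: superlevel_def bad_set_def)
    qed
    show "AE x in M. \<nu> x = enat k0 \<and> (\<forall>m. m \<in> ?good x) \<longrightarrow>
        condE M F k0 (indicator (superlevel \<nu> (2 powr real_of_int (- int n)))) x \<le> r" for n
    proof (intro AE_I2 impI)
      fix x assume "\<nu> x = enat k0 \<and> (\<forall>m. m \<in> ?good x)"
      then have "- int n \<in> ?good x" by blast
      then show "condE M F k0 (indicator (superlevel \<nu> (2 powr real_of_int (- int n)))) x \<le> r"
        unfolding good_exponents_def by blast
    qed
  qed (auto simp: superlevel_sets[OF \<nu>])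
  have exact: "AE x in M. \<nu> x = enat k0 \<and> m \<in> ?good x \<and> m - 1 \<notin> ?good x \<longrightarrow>
      condE M F k0 (indicator (bad_set \<nu>)) x \<le> r" for m
  proof (rule AE_condE_bad_set_le_r_if_covered[OF \<nu>, where G="\<lambda>_. superlevel \<nu> (2 powr real_of_int m)"])
    show "x \<in> (\<Union>n. superlevel \<nu> (2 powr real_of_int m))"
      if "\<nu> x = enat k0" "m \<in> ?good x \<and> m - 1 \<notin> ?good x" "x \<in> bad_set \<nu>" for x
      using that dyadic_P_eq_powr[of m \<nu> k0 x] by (auto simp: bad_set_def superlevel_def)
    show "AE x in M. \<nu> x = enat k0 \<and> m \<in> ?good x \<and> m - 1 \<notin> ?good x \<longrightarrow>
        condE M F k0 (indicator (superlevel \<nu> (2 powr real_of_int m))) x \<le> r" for n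
      by (intro AE_I2) (auto simp: good_exponents_def)
  qed (auto simp: superlevel_sets[OF \<nu>])
  have "AE x in M. \<forall>m. \<nu> x = enat k0 \<and> m \<in> ?good x \<and> m - 1 \<notin> ?good x \<longrightarrow>
      condE M F k0 (indicator (bad_set \<nu>)) x \<le> r"
    using exact by (subst AE_all_countable) auto
  with empty all show ?thesis
  proof eventually_elim
    case (elim x)
    then show ?case by (cases rule: good_exponents_cases[of \<nu> k0 x]) auto
  qed
qed

lemma AE_one_le_condE_superlevel:
  assumes \<nu>: "stopping_time_F M F \<nu>"
  shows "AE x in M. \<nu> x = enat k0 \<and> t < \<bar>Ef k0 x\<bar> \<longrightarrow> 1 \<le> condE M F k0 (indicator (superlevel \<nu> t)) x"
proof -
  define D where "D = {x \<in> space M. \<nu> x = enat k0} \<inter> {x \<in> space M. t < \<bar>Ef k0 x\<bar>}"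
  have DF: "D \<in> sets (F k0)"
    unfolding D_def by (intro sets.Int[OF stopping_time_eq_sets_F[OF \<nu>]] pred_sets_F) measurable
  then have DM: "D \<in> sets M" by (rule sets_F_imp_sets)
  have "D \<subseteq> superlevel \<nu> t"
  proof
    fix x assume "x \<in> D"
    then have x: "x \<in> space M" "ereal t < ereal \<bar>Ef k0 x\<bar>" "ereal \<bar>Ef k0 x\<bar> \<le> Mf \<nu> x"
      using abs_Ef_le_Mf[of \<nu> x k0] unfolding D_def by auto
    from x(2,3) have "ereal t < Mf \<nu> x" by (rule less_le_trans)
    with x(1) show "x \<in> superlevel \<nu> t" unfolding superlevel_def by simp
  qed
  then have "AE x in M. condE M F k0 (indicator D) x \<le> condE M F k0 (indicator (superlevel \<nu> t)) x"
    using DM superlevel_sets[OF \<nu>] by (intro AE_condE_mono) (auto split: split_indicator)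
  moreover have "AE x in M. condE M F k0 (indicator D) x = indicator D x"
    using DF DM by (intro AE_condE_eq_self) auto
  ultimately show ?thesis using AE_space
    by eventually_elim (auto simp: D_def split: split_indicator)
qed

lemma AE_abs_Ef_le_dyadic_P:
  assumes \<nu>: "stopping_time_F M F \<nu>"
  shows "AE x in M. \<nu> x = enat k0 \<longrightarrow> ereal \<bar>Ef k0 x\<bar> \<le> dyadic_P \<nu> k0 x"
proof -
  have "AE x in M. \<forall>m::int. \<nu> x = enat k0 \<and> 2 powr real_of_int m < \<bar>Ef k0 x\<bar> \<longrightarrow>
      1 \<le> condE M F k0 (indicator (superlevel \<nu> (2 powr real_of_int m))) x"
    unfolding AE_all_countable using AE_one_le_condE_superlevel[OF \<nu>] by blast
  then show ?thesis
  proof eventually_elim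
    case (elim x)
    have "ereal \<bar>Ef k0 x\<bar> \<le> ereal (2 powr real_of_int m)"
      if "\<nu> x = enat k0" "m \<in> good_exponents \<nu> k0 x" for m
    proof -
      have "condE M F k0 (indicator (superlevel \<nu> (2 powr real_of_int m))) x \<le> r"
        using that(2) unfolding good_exponents_def by auto
      show ?thesis
      proof (rule ccontr)
        assume "\<not> ?thesis"
        then have "2 powr real_of_int m < \<bar>Ef k0 x\<bar>" by simp
        with elim that(1) have "1 \<le> condE M F k0 (indicator (superlevel \<nu> (2 powr real_of_int m))) x"
          by blast
        with \<open>condE M F k0 _ x \<le> r\<close> r_less_1 show False by simp
      qed
    qed
    then show ?case unfolding dyadic_P_def by (auto intro: INF_greatest)
  qed
qed

lemma AE_condE_superlevel_antimono:
  assumes \<nu>: "stopping_time_F M F \<nu>"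
  shows "AE x in M. \<forall>t\<in>\<rat>. \<forall>m::int. t \<le> 2 powr real_of_int m \<longrightarrow>
     condE M F k0 (indicator (superlevel \<nu> (2 powr real_of_int m))) x \<le> condE M F k0 (indicator (superlevel \<nu> t)) x"
proof -
  have "AE x in M. condE M F k0 (indicator (superlevel \<nu> t')) x \<le> condE M F k0 (indicator (superlevel \<nu> t)) x"
    if "t \<le> t'" for t t'
    using superlevel_antimono[OF that, of \<nu>] superlevel_sets[OF \<nu>]
    by (intro AE_condE_mono) (auto split: split_indicator)
  then have "AE x in M. \<forall>m::int. t \<le> 2 powr real_of_int m \<longrightarrow>
      condE M F k0 (indicator (superlevel \<nu> (2 powr real_of_int m))) x \<le> condE M F k0 (indicator (superlevel \<nu> t)) x"
    for t
    unfolding AE_all_countable by (auto intro: AE_mp)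
  then show ?thesis by (intro AE_ball_countable[THEN iffD2] countable_rat) auto
qed

lemma dyadic_P_le_two_mult_admissible_level:
  assumes exceed: "\<forall>t\<in>\<rat>. t < \<bar>Ef k0 x\<bar> \<longrightarrow> 1 \<le> condE M F k0 (indicator (superlevel \<nu> t)) x"
    and antimono: "\<forall>t\<in>\<rat>. \<forall>m::int. t \<le> 2 powr real_of_int m \<longrightarrow>
      condE M F k0 (indicator (superlevel \<nu> (2 powr real_of_int m))) x \<le> condE M F k0 (indicator (superlevel \<nu> t)) x"
    and t: "t \<in> \<rat>" "condE M F k0 (indicator (superlevel \<nu> t)) x \<le> r"
  shows "dyadic_P \<nu> k0 x \<le> ereal 2 * ereal t"
proof -
  have "0 \<le> t"
  proof (rule ccontr)
    assume "\<not> 0 \<le> t"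
    then have "t < \<bar>Ef k0 x\<bar>" by simp
    with exceed t(1) have "1 \<le> condE M F k0 (indicator (superlevel \<nu> t)) x" by blast
    with t(2) r_less_1 show False by simp
  qed
  moreover have "dyadic_P \<nu> k0 x \<le> ereal (2 powr real_of_int m)" if "t \<le> 2 powr real_of_int m" for m
  proof -
    have "condE M F k0 (indicator (superlevel \<nu> (2 powr real_of_int m'))) x \<le> r" if "m \<le> m'" for m'
    proof -
      have "t \<le> 2 powr real_of_int m'"
        using \<open>t \<le> 2 powr real_of_int m\<close> that by (simp add: order_trans)
      with antimono t show ?thesis by (meson order_trans)
    qed
    then have "m \<in> good_exponents \<nu> k0 x" unfolding good_exponents_def by blast
    then show ?thesis unfolding dyadic_P_def by (rule INF_lower)
  qed
  ultimately show ?thesis using le_two_mult_if_dyadic_bound by simp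
qed

lemma AE_dyadic_P_le_two_Pr:
  assumes \<nu>: "stopping_time_F M F \<nu>"
  shows "AE x in M. \<nu> x = enat k0 \<longrightarrow> dyadic_P \<nu> k0 x \<le> ereal 2 * Pr M F r k0 (Mf \<nu>) x"
proof -
  have "AE x in M. \<forall>t\<in>\<rat>. \<nu> x = enat k0 \<and> t < \<bar>Ef k0 x\<bar> \<longrightarrow>
      1 \<le> condE M F k0 (indicator (superlevel \<nu> t)) x"
    by (intro AE_ball_countable[THEN iffD2] countable_rat) (use AE_one_le_condE_superlevel[OF \<nu>] in auto)
  then show ?thesis using AE_condE_superlevel_antimono[OF \<nu>, of k0]
  proof eventually_elim
    case (elim x)
    show ?case
    proof
      assume \<nu>x: "\<nu> x = enat k0"
      have "dyadic_P \<nu> k0 x * ereal (1 / 2) \<le> ereal t"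
        if "t \<in> \<rat>" "condE M F k0 (indicator (superlevel \<nu> t)) x \<le> r" for t
      proof -
        have "dyadic_P \<nu> k0 x \<le> ereal 2 * ereal t"
          by (rule dyadic_P_le_two_mult_admissible_level) (use elim \<nu>x that in auto)
        then show ?thesis by (simp add: ereal_mult_half_le_iff dyadic_P_nonneg)
      qed
      then have "dyadic_P \<nu> k0 x * ereal (1 / 2) \<le> Pr M F r k0 (Mf \<nu>) x"
        unfolding Pr_def superlevel_def[symmetric] by (auto intro: Inf_greatest)
      then show "dyadic_P \<nu> k0 x \<le> ereal 2 * Pr M F r k0 (Mf \<nu>) x"
        by (simp add: ereal_mult_half_le_iff dyadic_P_nonneg)
    qed
  qed
qed

lemma AE_one_le_R_condE_bad_set:
  assumes \<nu>: "stopping_time_F M F \<nu>" and "k0 < k"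
  shows "AE x in M. \<nu> x = enat k0 \<and> dyadic_P \<nu> k0 x < ereal \<bar>Ef k x\<bar> \<longrightarrow>
    1 \<le> R * condE M F (k - 1) (indicator (bad_set \<nu>)) x"
proof -
  have [measurable]: "dyadic_P \<nu> k0 \<in> borel_measurable (F k)"
    using measurable_F_mono[OF dyadic_P_measurable_F] \<open>k0 < k\<close> by simp
  define D where "D = {x \<in> space M. \<nu> x = enat k0} \<inter> {x \<in> space M. dyadic_P \<nu> k0 x < ereal \<bar>Ef k x\<bar>}"
  have DF: "D \<in> sets (F k)" unfolding D_def
    using \<open>k0 < k\<close> by (intro sets.Int in_sets_F_mono[OF stopping_time_eq_sets_F[OF \<nu>]] pred_sets_F) auto
  then have DM: "D \<in> sets M" by (rule sets_F_imp_sets)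
  have "D \<subseteq> bad_set \<nu>"
    using abs_Ef_le_Mf[of \<nu> _ k] \<open>k0 < k\<close> unfolding D_def bad_set_def by (fastforce intro: less_le_trans)
  then have "AE x in M. condE M F (k - 1) (indicator D) x \<le> condE M F (k - 1) (indicator (bad_set \<nu>)) x"
    using DM bad_set_sets[OF \<nu>] by (intro AE_condE_mono) (auto split: split_indicator)
  moreover have "AE x in M. condE M F k (indicator D) x = indicator D x"
    using DF DM by (intro AE_condE_eq_self) auto
  moreover have "AE x in M. condE M F k (indicator D) x \<le> R * condE M F (k - 1) (indicator D) x"
    using regular \<open>k0 < k\<close> DM unfolding regular_filtration_def by auto
  ultimately show ?thesis using AE_space
  proof eventually_elim
    case (elim x)
    show ?case
    proof
      assume "\<nu> x = enat k0 \<and> dyadic_P \<nu> k0 x < ereal \<bar>Ef k x\<bar>"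
      then have "1 \<le> R * condE M F (k - 1) (indicator D) x" using elim by (simp add: D_def)
      also have "\<dots> \<le> R * condE M F (k - 1) (indicator (bad_set \<nu>)) x"
        using elim(1) R_ge_1 by (intro mult_left_mono) auto
      finally show "1 \<le> R * condE M F (k - 1) (indicator (bad_set \<nu>)) x" .
    qed
  qed
qed

text \<open>Regularity keeps \<open>E\<^sub>k f\<close> below the dyadic level until the next stop: a violation at time
  \<open>k\<close> forces \<open>E\<^sub>k\<^sub>-\<^sub>1 1\<^bsub>bad\<^esub> \<ge> 1/R > \<theta>\<close>, so the process would have stopped at \<open>k - 1\<close>.\<close>
lemma AE_abs_Ef_le_dyadic_P_until_next_stop:
  assumes \<nu>: "stopping_time_F M F \<nu>"
  shows "AE x in M. \<forall>k0 k. \<nu> x = enat k0 \<longrightarrow> k0 \<le> k \<longrightarrow> enat k \<le> next_stop \<nu> x \<longrightarrow>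
    ereal \<bar>Ef k x\<bar> \<le> dyadic_P \<nu> k0 x"
proof -
  have "AE x in M. \<forall>k0. \<nu> x = enat k0 \<longrightarrow> condE M F k0 (indicator (bad_set \<nu>)) x \<le> r"
    unfolding AE_all_countable using AE_condE_bad_set_le_r[OF \<nu>] by blast
  moreover have "AE x in M. \<forall>k0. \<nu> x = enat k0 \<longrightarrow> ereal \<bar>Ef k0 x\<bar> \<le> dyadic_P \<nu> k0 x"
    unfolding AE_all_countable using AE_abs_Ef_le_dyadic_P[OF \<nu>] by blast
  moreover have "AE x in M. \<forall>k0 k. k0 < k \<longrightarrow> \<nu> x = enat k0 \<and> dyadic_P \<nu> k0 x < ereal \<bar>Ef k x\<bar> \<longrightarrow>
      1 \<le> R * condE M F (k - 1) (indicator (bad_set \<nu>)) x"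
    unfolding AE_all_countable using AE_one_le_R_condE_bad_set[OF \<nu>] by (auto intro: AE_I2)
  ultimately show ?thesis
  proof eventually_elim
    case (elim x)
    show ?case
    proof (intro allI impI)
      fix k0 k assume \<nu>x: "\<nu> x = enat k0" and "k0 \<le> k" and k_le: "enat k \<le> next_stop \<nu> x"
      show "ereal \<bar>Ef k x\<bar> \<le> dyadic_P \<nu> k0 x"
      proof (cases "k = k0")
        case False
        then have "k0 < k" using \<open>k0 \<le> k\<close> by simp
        have "condE M F (k - 1) (indicator (bad_set \<nu>)) x \<le> theta"
        proof (cases "k - 1 = k0")
          case True then show ?thesis using elim(1) \<nu>x r_le_theta by force
        next
          case False
          with \<open>k0 < k\<close> k_le have "k0 < k - 1" "enat (k - 1) < next_stop \<nu> x"
            by (auto intro: less_le_trans[of _ "enat k"])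
          then have "\<not> stop_cond \<nu> k0 (k - 1) x" using not_stop_cond_before_next_stop \<nu>x by blast
          then show ?thesis unfolding stop_cond_def by simp
        qed
        then have "R * condE M F (k - 1) (indicator (bad_set \<nu>)) x < 1"
          using R_mult_theta_less_1 R_ge_1 by (smt (verit) mult_left_mono)
        then show ?thesis using elim(3) \<open>k0 < k\<close> \<nu>x by force
      qed (use elim(2) \<nu>x in simp)
    qed
  qed
qed

section \<open>Sparseness\<close>

definition stopped_sum :: "('a \<Rightarrow> enat) \<Rightarrow> nat \<Rightarrow> nat \<Rightarrow> (nat \<Rightarrow> 'a \<Rightarrow> real) \<Rightarrow> 'a \<Rightarrow> real" where
  "stopped_sum \<tau> k0 n g x = (\<Sum>i\<in>{k0<..n}. if enat i \<le> \<tau> x then g i x else 0)"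

lemma stopped_sum_eq_sum: "enat n \<le> \<tau> x \<Longrightarrow> stopped_sum \<tau> k0 n g x = (\<Sum>i\<in>{k0<..n}. g i x)"
  unfolding stopped_sum_def by (intro sum.cong) (auto intro: order_trans[of _ "enat n"])

lemma stopped_sum_eq_sum_stop:
  assumes "\<tau> x = enat b" "b \<le> n"
  shows "stopped_sum \<tau> k0 n g x = (\<Sum>i\<in>{k0<..b}. g i x)"
proof -
  have "{i \<in> {k0<..n}. enat i \<le> \<tau> x} = {k0<..b}" using assms by auto
  then show ?thesis unfolding stopped_sum_def by (simp add: sum.inter_filter[symmetric])
qed

lemma ess_bounded_stopped_sum:
  assumes [measurable]: "\<tau> \<in> measurable M (count_space UNIV)" and "\<And>i. ess_bounded (g i)"
  shows "ess_bounded (stopped_sum \<tau> k0 n g)"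
  unfolding stopped_sum_def[abs_def]
proof (intro ess_bounded_sum ess_bounded_if_then_0)
  show "Measurable.pred M (\<lambda>x. enat i \<le> \<tau> x)" for i by measurable
qed (use assms(2) in auto)

text \<open>The stopped transform is the transform of the stopped martingale by the predictable multipliers
  \<open>1\<^bsub>A \<inter> {i \<le> \<tau>}\<^esub>\<close>, so orthogonality of the differences and \<open>|\<sigma>| \<le> 1\<close> give the comparison.\<close>
lemma integral_square_stopped_transform_le:
  assumes \<tau>: "stopping_time_F M F \<tau>" and A: "A \<in> sets (F k0)"
  shows "(\<integral>x. (indicator A x * stopped_sum \<tau> k0 n (\<lambda>i x. \<sigma> i x * df i x) x)\<^sup>2 \<partial>M)
    \<le> (\<integral>x. (indicator A x * stopped_sum \<tau> k0 n df x)\<^sup>2 \<partial>M)"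
proof -
  define b where "b i = (if k0 < i then indicator (A \<inter> {x \<in> space M. enat i \<le> \<tau> x}) else (\<lambda>_. 0::real))" for i
  have b_sets: "A \<inter> {x \<in> space M. enat i \<le> \<tau> x} \<in> sets (F (i - 1))" if "k0 < i" for i
    using stopping_time_ge_sets_F[OF \<tau>, of i] in_sets_F_mono[OF A, of "i - 1"] that by auto
  then have b_measurable: "b i \<in> borel_measurable (F (i - 1))" for i
    unfolding b_def by (cases "k0 < i") simp_all
  have b_bounded: "ess_bounded (b i)" for i
    using sets_F_imp_sets[OF b_sets] unfolding b_def by (cases "k0 < i") auto
  have bs_measurable: "(\<lambda>x. b i x * \<sigma> i x) \<in> borel_measurable (F (i - 1))" for i
    using b_measurable sigma_measurable_F[of i "i - 1"] by measurable
  have stopped: "indicator A x * stopped_sum \<tau> k0 n g x = (\<Sum>i\<in>{k0<..n}. b i x * g i x)"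
    if "x \<in> space M" for x g
    using that unfolding stopped_sum_def sum_distrib_left
    by (intro sum.cong) (auto simp: b_def split: split_indicator)
  have "(\<integral>x. (indicator A x * stopped_sum \<tau> k0 n (\<lambda>i x. \<sigma> i x * df i x) x)\<^sup>2 \<partial>M)
      = (\<integral>x. (\<Sum>i\<in>{k0<..n}. (b i x * \<sigma> i x) * df i x)\<^sup>2 \<partial>M)"
    using stopped[of _ "\<lambda>i x. \<sigma> i x * df i x"]
    by (intro Bochner_Integration.integral_cong refl) (simp add: mult.assoc)
  also have "\<dots> = (\<Sum>i\<in>{k0<..n}. \<integral>x. (b i x * \<sigma> i x)\<^sup>2 * (df i x)\<^sup>2 \<partial>M)"
    by (rule integral_square_sum_predictable[OF bs_measurable ess_bounded_mult[OF b_bounded sigma_ess_bounded]])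
  also have "\<dots> \<le> (\<Sum>i\<in>{k0<..n}. \<integral>x. (b i x)\<^sup>2 * (df i x)\<^sup>2 \<partial>M)"
  proof (intro sum_mono integral_mono_AE)
    fix i
    show "integrable M (\<lambda>x. (b i x * \<sigma> i x)\<^sup>2 * (df i x)\<^sup>2)" "integrable M (\<lambda>x. (b i x)\<^sup>2 * (df i x)\<^sup>2)"
      by (intro ess_bounded_integrable ess_bounded_mult ess_bounded_power2 b_bounded
          sigma_ess_bounded mdiff_ess_bounded)+
    show "AE x in M. (b i x * \<sigma> i x)\<^sup>2 * (df i x)\<^sup>2 \<le> (b i x)\<^sup>2 * (df i x)\<^sup>2"
      using AE_abs_sigma_le_1
      by eventually_elim (auto simp: power_mult_distrib abs_square_le_1 intro!: mult_right_mono mult_left_le)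
  qed
  also have "\<dots> = (\<integral>x. (\<Sum>i\<in>{k0<..n}. b i x * df i x)\<^sup>2 \<partial>M)"
    by (rule integral_square_sum_predictable[OF b_measurable b_bounded, symmetric])
  also have "\<dots> = (\<integral>x. (indicator A x * stopped_sum \<tau> k0 n df x)\<^sup>2 \<partial>M)"
    using stopped[of _ df] by (intro Bochner_Integration.integral_cong refl) simp
  finally show ?thesis .
qed

definition jump_set :: "('a \<Rightarrow> enat) \<Rightarrow> nat \<Rightarrow> 'a set" where
  "jump_set \<nu> k0 = {x \<in> space M. \<exists>b. next_stop \<nu> x = enat b \<and> ereal K * dyadic_P \<nu> k0 x < ereal \<bar>Tf b x - Tf k0 x\<bar>}"

definition jump_set_upto :: "('a \<Rightarrow> enat) \<Rightarrow> nat \<Rightarrow> nat \<Rightarrow> 'a set" where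
  "jump_set_upto \<nu> k0 n =
     {x \<in> space M. \<exists>b\<le>n. next_stop \<nu> x = enat b \<and> ereal K * dyadic_P \<nu> k0 x < ereal \<bar>Tf b x - Tf k0 x\<bar>}"

lemma jump_set_sets: "stopping_time_F M F \<nu> \<Longrightarrow> jump_set \<nu> k0 \<in> sets M"
  using stopping_time_measurable[OF stopping_time_next_stop] unfolding jump_set_def by measurable

lemma jump_set_upto_sets: "stopping_time_F M F \<nu> \<Longrightarrow> jump_set_upto \<nu> k0 n \<in> sets M"
  using stopping_time_measurable[OF stopping_time_next_stop] unfolding jump_set_upto_def by measurable

lemma AE_square_stopped_martingale_le:
  assumes \<nu>: "stopping_time_F M F \<nu>" and A: "A \<subseteq> {x \<in> space M. \<nu> x = enat k0}"
    and c: "\<And>x. x \<in> A \<Longrightarrow> dyadic_P \<nu> k0 x = ereal c"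
  shows "AE x in M. x \<in> A \<longrightarrow> (stopped_sum (next_stop \<nu>) k0 n df x)\<^sup>2 \<le> (2 * c)\<^sup>2"
  using AE_abs_Ef_le_dyadic_P_until_next_stop[OF \<nu>]
proof eventually_elim
  case (elim x)
  show ?case
  proof
    assume "x \<in> A"
    then have \<nu>x: "\<nu> x = enat k0" using A by auto
    have bound: "\<bar>Ef e x\<bar> \<le> c" if "k0 \<le> e" "enat e \<le> next_stop \<nu> x" for e
      using elim \<nu>x that c[OF \<open>x \<in> A\<close>] by fastforce
    obtain e where e: "enat e \<le> next_stop \<nu> x" and sum: "stopped_sum (next_stop \<nu>) k0 n df x = (\<Sum>i\<in>{k0<..e}. df i x)"
    proof (cases "enat n \<le> next_stop \<nu> x")
      case True
      then show ?thesis using stopped_sum_eq_sum by (intro that[of n]) auto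
    next
      case False
      then obtain b where "next_stop \<nu> x = enat b" "b \<le> n" by (cases "next_stop \<nu> x") auto
      then show ?thesis using stopped_sum_eq_sum_stop by (intro that[of b]) auto
    qed
    have "\<bar>stopped_sum (next_stop \<nu>) k0 n df x\<bar> \<le> \<bar>2 * c\<bar>"
    proof (cases "k0 \<le> e")
      case True
      then show ?thesis
        unfolding sum sum_mdiff_telescope[OF True]
        using bound[OF True e] bound[of k0] next_stop_ge[of \<nu> x] \<nu>x by simp
    next
      case False
      then show ?thesis unfolding sum using bound[of k0] next_stop_ge[of \<nu> x] \<nu>x by simp
    qed
    then show "(stopped_sum (next_stop \<nu>) k0 n df x)\<^sup>2 \<le> (2 * c)\<^sup>2" by (simp only: abs_le_square_iff)
  qed
qed

lemma square_stopped_transform_ge_on_jump_set_upto: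
  assumes A: "A \<subseteq> {x \<in> space M. \<nu> x = enat k0}" and "0 < c" and c: "\<And>x. x \<in> A \<Longrightarrow> dyadic_P \<nu> k0 x = ereal c"
    and x: "x \<in> A \<inter> jump_set_upto \<nu> k0 n"
  shows "(K * c)\<^sup>2 \<le> (stopped_sum (next_stop \<nu>) k0 n (\<lambda>i x. \<sigma> i x * df i x) x)\<^sup>2"
proof -
  obtain b where b: "b \<le> n" "next_stop \<nu> x = enat b" "ereal K * dyadic_P \<nu> k0 x < ereal \<bar>Tf b x - Tf k0 x\<bar>"
    using x unfolding jump_set_upto_def by blast
  have "k0 < b" using x A next_stop_gt b(2) by blast
  then have "stopped_sum (next_stop \<nu>) k0 n (\<lambda>i x. \<sigma> i x * df i x) x = Tf b x - Tf k0 x"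
    using b stopped_sum_eq_sum_stop[of "next_stop \<nu>" x b n] Tf_diff_eq_sum[of k0 b x] by simp
  moreover have "K * c < \<bar>Tf b x - Tf k0 x\<bar>" using b x c by simp
  then have "(K * c)\<^sup>2 \<le> (Tf b x - Tf k0 x)\<^sup>2"
    using K_pos \<open>0 < c\<close> by (simp add: abs_le_square_iff[symmetric] abs_mult)
  ultimately show ?thesis by simp
qed

text \<open>Chebyshev for the stopped transform, which jumps by more than \<open>K c\<close> on the set, compared in
  \<open>L\<^sup>2\<close> with the stopped martingale, which stays within \<open>2 c\<close>.\<close>
lemma measure_jump_set_upto_le:
  assumes \<nu>: "stopping_time_F M F \<nu>" and A: "A \<in> sets (F k0)" "A \<subseteq> {x \<in> space M. \<nu> x = enat k0}"
    and "0 < c" and c: "\<And>x. x \<in> A \<Longrightarrow> dyadic_P \<nu> k0 x = ereal c"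
  shows "(K * c)\<^sup>2 * measure M (A \<inter> jump_set_upto \<nu> k0 n) \<le> (2 * c)\<^sup>2 * measure M A"
proof -
  have AM: "A \<in> sets M" using sets_F_imp_sets[OF A(1)] .
  have E: "A \<inter> jump_set_upto \<nu> k0 n \<in> sets M" using AM jump_set_upto_sets[OF \<nu>] by auto
  have square_integrable: "integrable M (\<lambda>x. (indicator A x * stopped_sum (next_stop \<nu>) k0 n g x)\<^sup>2)"
    if "\<And>i. ess_bounded (g i)" for g
    using AM stopping_time_measurable[OF stopping_time_next_stop[OF \<nu>]] that
    by (intro ess_bounded_integrable ess_bounded_power2 ess_bounded_mult ess_bounded_stopped_sum) auto
  have "(K * c)\<^sup>2 * measure M (A \<inter> jump_set_upto \<nu> k0 n)
      = (\<integral>x. indicator (A \<inter> jump_set_upto \<nu> k0 n) x * (K * c)\<^sup>2 \<partial>M)"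
    using E by simp
  also have "\<dots> \<le> (\<integral>x. (indicator A x * stopped_sum (next_stop \<nu>) k0 n (\<lambda>i x. \<sigma> i x * df i x) x)\<^sup>2 \<partial>M)"
  proof (rule integral_mono)
    show "integrable M (\<lambda>x. indicator (A \<inter> jump_set_upto \<nu> k0 n) x * (K * c)\<^sup>2)" using E by simp
    show "integrable M (\<lambda>x. (indicator A x * stopped_sum (next_stop \<nu>) k0 n (\<lambda>i x. \<sigma> i x * df i x) x)\<^sup>2)"
      by (rule square_integrable) (intro ess_bounded_mult sigma_ess_bounded mdiff_ess_bounded)
    show "indicator (A \<inter> jump_set_upto \<nu> k0 n) x * (K * c)\<^sup>2
        \<le> (indicator A x * stopped_sum (next_stop \<nu>) k0 n (\<lambda>i x. \<sigma> i x * df i x) x)\<^sup>2" for x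
      using square_stopped_transform_ge_on_jump_set_upto[OF A(2) \<open>0 < c\<close> c, of x n]
      by (auto split: split_indicator)
  qed
  also have "\<dots> \<le> (\<integral>x. (indicator A x * stopped_sum (next_stop \<nu>) k0 n df x)\<^sup>2 \<partial>M)"
    by (rule integral_square_stopped_transform_le[OF stopping_time_next_stop[OF \<nu>] A(1)])
  also have "\<dots> \<le> (\<integral>x. indicator A x * (2 * c)\<^sup>2 \<partial>M)"
  proof (rule integral_mono_AE)
    show "integrable M (\<lambda>x. (indicator A x * stopped_sum (next_stop \<nu>) k0 n df x)\<^sup>2)"
      using square_integrable mdiff_ess_bounded by blast
    have "AE x in M. x \<in> A \<longrightarrow> (stopped_sum (next_stop \<nu>) k0 n df x)\<^sup>2 \<le> (2 * c)\<^sup>2"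
      using c by (rule AE_square_stopped_martingale_le[OF \<nu> A(2)])
    then show "AE x in M. (indicator A x * stopped_sum (next_stop \<nu>) k0 n df x)\<^sup>2 \<le> indicator A x * (2 * c)\<^sup>2"
      by eventually_elim (auto split: split_indicator)
  qed (use AM in simp)
  also have "\<dots> = (2 * c)\<^sup>2 * measure M A" using AM by simp
  finally show ?thesis .
qed

lemma jump_set_eq_Union_upto: "jump_set \<nu> k0 = (\<Union>n. jump_set_upto \<nu> k0 n)"
proof (intro set_eqI iffI)
  fix x assume "x \<in> jump_set \<nu> k0"
  then obtain b where "x \<in> space M" "next_stop \<nu> x = enat b"
    "ereal K * dyadic_P \<nu> k0 x < ereal \<bar>Tf b x - Tf k0 x\<bar>" unfolding jump_set_def by blast
  then have "x \<in> jump_set_upto \<nu> k0 b" unfolding jump_set_upto_def by blast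
  then show "x \<in> (\<Union>n. jump_set_upto \<nu> k0 n)" by blast
qed (auto simp: jump_set_def jump_set_upto_def)

lemma measure_jump_set_le:
  assumes \<nu>: "stopping_time_F M F \<nu>" and A: "A \<in> sets (F k0)" "A \<subseteq> {x \<in> space M. \<nu> x = enat k0}"
    and "0 < c" and c: "\<And>x. x \<in> A \<Longrightarrow> dyadic_P \<nu> k0 x = ereal c"
  shows "measure M (A \<inter> jump_set \<nu> k0) \<le> 4 / K\<^sup>2 * measure M A"
proof -
  have pos: "0 < (K * c)\<^sup>2" using K_pos \<open>0 < c\<close> by simp
  have "measure M (A \<inter> jump_set_upto \<nu> k0 n) \<le> (2 * c)\<^sup>2 * measure M A / (K * c)\<^sup>2" for n
    using measure_jump_set_upto_le[OF assms, of n] pos by (simp add: pos_le_divide_eq mult.commute)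
  also have "(2 * c)\<^sup>2 * measure M A / (K * c)\<^sup>2 = 4 / K\<^sup>2 * measure M A"
    using \<open>0 < c\<close> by (simp add: power_mult_distrib)
  finally have upto: "measure M (A \<inter> jump_set_upto \<nu> k0 n) \<le> 4 / K\<^sup>2 * measure M A" for n .
  have "incseq (jump_set_upto \<nu> k0)"
    unfolding incseq_def jump_set_upto_def by (auto intro: order_trans)
  then have "(\<lambda>n. measure M (A \<inter> jump_set_upto \<nu> k0 n)) \<longlonglongrightarrow> measure M (\<Union>n. A \<inter> jump_set_upto \<nu> k0 n)"
    using sets_F_imp_sets[OF A(1)] jump_set_upto_sets[OF \<nu>]
    by (intro finite_Lim_measure_incseq) (auto simp: incseq_def)
  then show ?thesis
    using upto by (simp add: jump_set_eq_Union_upto LIMSEQ_le_const2)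
qed

lemma measure_jump_set_eq_0:
  assumes \<nu>: "stopping_time_F M F \<nu>" and A: "A \<in> sets M" "A \<subseteq> {x \<in> space M. \<nu> x = enat k0}"
    and zero: "\<And>x. x \<in> A \<Longrightarrow> dyadic_P \<nu> k0 x = 0"
  shows "measure M (A \<inter> jump_set \<nu> k0) = 0"
proof -
  have AE: "AE x in M. x \<notin> A \<inter> jump_set \<nu> k0"
    using AE_abs_Ef_le_dyadic_P_until_next_stop[OF \<nu>]
  proof eventually_elim
    case (elim x)
    show ?case
    proof
      assume x: "x \<in> A \<inter> jump_set \<nu> k0"
      then obtain b where b: "next_stop \<nu> x = enat b" "ereal K * dyadic_P \<nu> k0 x < ereal \<bar>Tf b x - Tf k0 x\<bar>"
        unfolding jump_set_def by blast
      have \<nu>x: "\<nu> x = enat k0" and x0: "dyadic_P \<nu> k0 x = 0" using x A zero by auto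
      have Ef_0: "Ef i x = 0" if "k0 \<le> i" "i \<le> b" for i
      proof -
        have "ereal \<bar>Ef i x\<bar> \<le> dyadic_P \<nu> k0 x" using elim \<nu>x that b(1) by simp
        then show ?thesis using x0 by simp
      qed
      have "Tf b x - Tf k0 x = 0"
        using next_stop_gt[OF \<nu>x b(1)] Ef_0
        by (auto simp: Tf_diff_eq_sum mdiff_pos intro!: sum.neutral)
      with b(2) x0 show False by simp
    qed
  qed
  have eq: "{x \<in> space M. \<not> x \<notin> A \<inter> jump_set \<nu> k0} = A \<inter> jump_set \<nu> k0"
    unfolding jump_set_def by auto
  have "emeasure M (A \<inter> jump_set \<nu> k0) = 0"
    using AE_iff_measurable[OF sets.Int[OF A(1) jump_set_sets[OF \<nu>]] eq] AE by simp
  then show ?thesis by (simp add: measure_def)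
qed

lemma measure_jump_set_le_if_constant:
  assumes \<nu>: "stopping_time_F M F \<nu>" and A: "A \<in> sets (F k0)" "A \<subseteq> {x \<in> space M. \<nu> x = enat k0}"
    and v: "\<And>x. x \<in> A \<Longrightarrow> dyadic_P \<nu> k0 x = v"
  shows "measure M (A \<inter> jump_set \<nu> k0) \<le> 4 / K\<^sup>2 * measure M A"
proof (cases "A = {}")
  case False
  then obtain x where "x \<in> A" by blast
  then have "0 \<le> v" using v[OF \<open>x \<in> A\<close>] dyadic_P_nonneg[of \<nu> k0 x] by simp
  then consider "v = \<infinity>" | "v = 0" | c where "v = ereal c" "0 < c"
    by (cases v) force+
  then show ?thesis
  proof cases
    case 1
    then have "A \<inter> jump_set \<nu> k0 = {}" using v K_pos unfolding jump_set_def by auto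
    then show ?thesis by simp
  next
    case 2
    then show ?thesis using measure_jump_set_eq_0[OF \<nu> sets_F_imp_sets[OF A(1)] A(2)] v by simp
  next
    case 3
    then show ?thesis using measure_jump_set_le[OF \<nu> A] v by simp
  qed
qed simp

lemma measure_theta_exceed_le:
  assumes \<nu>: "stopping_time_F M F \<nu>" and A: "A \<in> sets (F k0)" "A \<subseteq> {x \<in> space M. \<nu> x = enat k0}"
  shows "measure M (A \<inter> {x \<in> space M. \<exists>k>k0. theta < condE M F k (indicator (bad_set \<nu>)) x})
    \<le> r / theta * measure M A"
proof -
  have "theta * measure M (A \<inter> {x \<in> space M. \<exists>k>k0. theta < condE M F k (indicator (bad_set \<nu>)) x})
      \<le> measure M (A \<inter> bad_set \<nu>)"
    using theta_pos by (intro measure_exceed_condE_indicator_le A(1) bad_set_sets[OF \<nu>]) simp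
  also have "\<dots> \<le> r * measure M A"
    using AE_condE_bad_set_le_r[OF \<nu>, of k0] A
    by (intro measure_Int_le_if_AE_condE_le bad_set_sets[OF \<nu>]) (auto elim!: AE_mp)
  finally show ?thesis using theta_pos by (simp add: field_simps)
qed

definition dyadic_values :: "ereal set" where
  "dyadic_values = insert \<infinity> (insert 0 (range (\<lambda>m::int. ereal (2 powr real_of_int m))))"

lemma countable_dyadic_values: "countable dyadic_values"
  unfolding dyadic_values_def by simp

lemma dyadic_P_in_dyadic_values: "dyadic_P \<nu> k x \<in> dyadic_values"
  by (cases rule: good_exponents_cases[of \<nu> k x])
    (auto simp: dyadic_values_def dyadic_P_empty dyadic_P_UNIV dyadic_P_eq_powr)

text \<open>The process stops again either because \<open>E\<^sub>k 1\<^bsub>bad\<^esub>\<close> exceeds \<open>\<theta>\<close>, which has conditional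
  probability at most \<open>r/\<theta>\<close>, or because the transform jumps, which has at most \<open>4/K\<^sup>2\<close>.\<close>
lemma measure_next_stop_finite_le_half_on_piece:
  assumes \<nu>: "stopping_time_F M F \<nu>" and A: "A \<in> sets (F k0)" "A \<subseteq> {x \<in> space M. \<nu> x = enat k0}"
    and v: "\<And>x. x \<in> A \<Longrightarrow> dyadic_P \<nu> k0 x = v"
  shows "measure M (A \<inter> {x \<in> space M. next_stop \<nu> x < \<infinity>}) \<le> 1 / 2 * measure M A"
proof -
  let ?exceed = "{x \<in> space M. \<exists>k>k0. theta < condE M F k (indicator (bad_set \<nu>)) x}"
  have "A \<inter> {x \<in> space M. next_stop \<nu> x < \<infinity>} \<subseteq> (A \<inter> ?exceed) \<union> (A \<inter> jump_set \<nu> k0)"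
  proof
    fix x assume x: "x \<in> A \<inter> {x \<in> space M. next_stop \<nu> x < \<infinity>}"
    then obtain b where b: "next_stop \<nu> x = enat b" by (cases "next_stop \<nu> x") auto
    have "\<nu> x = enat k0" using x A(2) by auto
    with b have "stop_cond \<nu> k0 b x" "k0 < b" by (auto intro: stop_cond_next_stop next_stop_gt)
    with x b show "x \<in> (A \<inter> ?exceed) \<union> (A \<inter> jump_set \<nu> k0)"
      unfolding stop_cond_def jump_set_def by blast
  qed
  then have "measure M (A \<inter> {x \<in> space M. next_stop \<nu> x < \<infinity>})
      \<le> measure M (A \<inter> ?exceed) + measure M (A \<inter> jump_set \<nu> k0)"
    using sets_F_imp_sets[OF A(1)] jump_set_sets[OF \<nu>]
    by (intro order_trans[OF finite_measure_mono measure_Un_le]) auto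
  also have "\<dots> \<le> r / theta * measure M A + 4 / K\<^sup>2 * measure M A"
    using measure_theta_exceed_le[OF \<nu> A] measure_jump_set_le_if_constant[OF \<nu> A v] by simp
  also have "\<dots> = (r / theta + 4 / K\<^sup>2) * measure M A" by (simp add: distrib_right)
  also have "\<dots> \<le> 1 / 2 * measure M A" by (rule mult_right_mono[OF r_div_theta_add_le_half]) simp
  finally show ?thesis .
qed

lemma measure_next_stop_finite_le_half:
  assumes \<nu>: "stopping_time_F M F \<nu>" and A: "A \<in> stopped_sets M F \<nu>"
    and A_finite: "A \<subseteq> {x \<in> space M. \<nu> x < \<infinity>}"
  shows "measure M (A \<inter> {x \<in> space M. next_stop \<nu> x < \<infinity>}) \<le> measure M A / 2"
proof -
  define X where "X = (\<lambda>(k0, v). {x \<in> space M. \<nu> x = enat k0 \<and> dyadic_P \<nu> k0 x = v})"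
  have X_sets_F: "X (k0, v) \<in> sets (F k0)" for k0 v
  proof -
    have "X (k0, v) = {x \<in> space M. \<nu> x = enat k0} \<inter> {x \<in> space M. dyadic_P \<nu> k0 x = v}"
      unfolding X_def by auto
    moreover have "{x \<in> space M. dyadic_P \<nu> k0 x = v} \<in> sets (F k0)" by (intro pred_sets_F) measurable
    ultimately show ?thesis using stopping_time_eq_sets_F[OF \<nu>] by simp
  qed
  have pieces: "measure M (A \<inter> X i \<inter> {x \<in> space M. next_stop \<nu> x < \<infinity>}) \<le> 1 / 2 * measure M (A \<inter> X i)" for i
  proof (cases i)
    case (Pair k0 v)
    have "A \<inter> X i = (A \<inter> {x \<in> space M. \<nu> x = enat k0}) \<inter> X (k0, v)"
      using Pair by (auto simp: X_def)
    then have "A \<inter> X i \<in> sets (F k0)" "A \<inter> X i \<subseteq> {x \<in> space M. \<nu> x = enat k0}"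
      using stopped_sets_Int_eq_sets_F[OF A, of k0] X_sets_F[of k0 v] by auto
    then show ?thesis
      by (rule measure_next_stop_finite_le_half_on_piece[OF \<nu>, where v=v]) (auto simp: X_def Pair)
  qed
  have X_sets: "X i \<in> sets M" for i
    using X_sets_F sets_F_imp_sets by (cases i) simp
  have disjoint: "disjoint_family_on X (UNIV \<times> dyadic_values)"
    unfolding disjoint_family_on_def X_def by auto
  have cover: "A \<subseteq> (\<Union>i\<in>UNIV \<times> dyadic_values. X i)"
  proof
    fix x assume "x \<in> A"
    then obtain k0 where "x \<in> space M" "\<nu> x = enat k0" using A_finite by (cases "\<nu> x") auto
    then have "x \<in> X (k0, dyadic_P \<nu> k0 x)" by (simp add: X_def)
    then show "x \<in> (\<Union>i\<in>UNIV \<times> dyadic_values. X i)" using dyadic_P_in_dyadic_values by blast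
  qed
  have "A \<in> sets M" using A unfolding stopped_sets_def by blast
  moreover have "{x \<in> space M. next_stop \<nu> x < \<infinity>} \<in> sets M"
    using stopping_time_measurable[OF stopping_time_next_stop[OF \<nu>]] by measurable
  ultimately have "measure M (A \<inter> {x \<in> space M. next_stop \<nu> x < \<infinity>}) \<le> 1 / 2 * measure M A"
    using countable_dyadic_values
    by (intro measure_Int_le_if_partition[OF _ X_sets disjoint _ cover _ _ pieces]) auto
  then show ?thesis by simp
qed

section \<open>Domination of the maximal transform\<close>

definition stops :: "nat \<Rightarrow> 'a \<Rightarrow> enat" where "stops j = (next_stop ^^ j) (\<lambda>_. 0)"

lemma stops_0 [simp]: "stops 0 = (\<lambda>_. 0)" and stops_Suc: "stops (Suc j) = next_stop (stops j)"
  unfolding stops_def by simp_all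

lemma stopping_time_stops: "stopping_time_F M F (stops j)"
proof (induction j)
  case 0
  show ?case unfolding stopping_time_F_def using sets.top[of "F _"] by (auto simp: zero_enat_def[symmetric])
qed (simp add: stops_Suc stopping_time_next_stop)

lemma stops_Suc_finite:
  assumes "stops (Suc j) x = enat b"
  shows "\<exists>a. stops j x = enat a \<and> a < b"
proof (cases "stops j x")
  case (enat a)
  then show ?thesis using assms next_stop_gt[of "stops j" x a b] by (simp add: stops_Suc)
next
  case infinity
  then show ?thesis using assms by (simp add: stops_Suc next_stop_def)
qed

lemma stops_ge: "stops j x = enat a \<Longrightarrow> j \<le> a"
proof (induction j arbitrary: a)
  case (Suc j)
  then obtain a' where "stops j x = enat a'" "a' < a" using stops_Suc_finite by blast
  with Suc.IH show ?case by fastforce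
qed simp

lemma sparse_stopping_stops: "sparse_stopping M F stops"
  unfolding sparse_stopping_def
  using stopping_time_stops next_stop_ge measure_next_stop_finite_le_half[OF stopping_time_stops]
  by (simp add: stops_Suc)

definition level :: "nat \<Rightarrow> 'a \<Rightarrow> ereal" where
  "level j x = (case stops j x of enat k \<Rightarrow> dyadic_P (stops j) k x | \<infinity> \<Rightarrow> 0)"

lemma level_nonneg: "0 \<le> level j x"
  unfolding level_def by (simp add: dyadic_P_nonneg split: enat.split)

lemma AE_level_le_two_Pr_stop:
  "AE x in M. \<forall>j. level j x \<le> ereal 2 * Pr_stop M F r (stops j) (Mf (stops j)) x"
proof -
  have "AE x in M. \<forall>j k. stops j x = enat k \<longrightarrow> dyadic_P (stops j) k x \<le> ereal 2 * Pr M F r k (Mf (stops j)) x"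
    using AE_dyadic_P_le_two_Pr[OF stopping_time_stops] by (simp add: AE_all_countable)
  then show ?thesis
  proof eventually_elim
    case (elim x)
    show ?case
    proof
      fix j show "level j x \<le> ereal 2 * Pr_stop M F r (stops j) (Mf (stops j)) x"
        using elim by (cases "stops j x") (simp_all add: level_def Pr_stop_def)
    qed
  qed
qed

lemma AE_abs_Ef_le_level:
  "AE x in M. \<forall>j k. stops j x \<le> enat k \<longrightarrow> enat k \<le> stops (Suc j) x \<longrightarrow> ereal \<bar>Ef k x\<bar> \<le> level j x"
proof -
  have "AE x in M. \<forall>j k0 k. stops j x = enat k0 \<longrightarrow> k0 \<le> k \<longrightarrow> enat k \<le> stops (Suc j) x \<longrightarrow>
      ereal \<bar>Ef k x\<bar> \<le> dyadic_P (stops j) k0 x"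
    using AE_abs_Ef_le_dyadic_P_until_next_stop[OF stopping_time_stops] by (simp add: AE_all_countable stops_Suc)
  then show ?thesis
  proof eventually_elim
    case (elim x)
    show ?case
    proof (intro allI impI)
      fix j k assume "stops j x \<le> enat k" "enat k \<le> stops (Suc j) x"
      moreover from this(1) obtain k0 where "stops j x = enat k0" "k0 \<le> k"
        by (cases "stops j x") auto
      ultimately have "ereal \<bar>Ef k x\<bar> \<le> dyadic_P (stops j) k0 x" using elim by blast
      with \<open>stops j x = enat k0\<close> show "ereal \<bar>Ef k x\<bar> \<le> level j x" by (simp add: level_def)
    qed
  qed
qed

lemma abs_Tf_diff_le_level:
  assumes "stops j x = enat a" "a \<le> k" "enat k < stops (Suc j) x"
  shows "ereal \<bar>Tf k x - Tf a x\<bar> \<le> ereal K * level j x"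
proof (cases "k = a")
  case True
  then show ?thesis using K_pos level_nonneg[of j x] by (cases "level j x") simp_all
next
  case False
  with assms have "\<not> stop_cond (stops j) a k x" by (simp add: stops_Suc not_stop_cond_before_next_stop)
  with assms(1) show ?thesis by (simp add: stop_cond_def level_def not_less)
qed

text \<open>Between consecutive stops the transform moves by at most \<open>K\<close> times the current level, and the
  last martingale difference before a stop is at most twice that level.\<close>
lemma abs_Tf_at_stop_le:
  assumes Ef_le: "\<forall>j k. stops j x \<le> enat k \<longrightarrow> enat k \<le> stops (Suc j) x \<longrightarrow> ereal \<bar>Ef k x\<bar> \<le> level j x"
    and sigma_le: "\<forall>k. \<bar>\<sigma> k x\<bar> \<le> 1" and m: "\<And>j. level j x = ereal (m j)"
    and "stops j x = enat a"
  shows "\<bar>Tf a x\<bar> \<le> (K + 3) * (\<Sum>i<j. m i) + m j"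
  using \<open>stops j x = enat a\<close>
proof (induction j arbitrary: a)
  case 0
  then have "a = 0" by (simp add: zero_enat_def)
  moreover have "ereal \<bar>Ef 0 x\<bar> \<le> level 0 x"
    using Ef_le[rule_format, of 0 0] next_stop_ge[of "stops 0" x] by (simp add: stops_Suc zero_enat_def)
  ultimately show ?case
    using sigma_le m[of 0] mult_left_le_one_le[of "\<bar>Ef 0 x\<bar>" "\<bar>\<sigma> 0 x\<bar>"]
    by (simp add: Tf_def mdiff_0 abs_mult)
next
  case (Suc j)
  obtain a' where a': "stops j x = enat a'" "a' < a" using stops_Suc_finite[OF Suc.prems] by blast
  have m_nonneg: "0 \<le> m i" for i using level_nonneg[of i x] m[of i] by simp
  have Ef_a: "\<bar>Ef k x\<bar> \<le> m j" if "a' \<le> k" "k \<le> a" for k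
    using Ef_le[rule_format, of j k] m[of j] a'(1) Suc.prems that by simp
  have "\<bar>Tf (a - 1) x - Tf a' x\<bar> \<le> K * m j"
    using abs_Tf_diff_le_level[OF a'(1), of "a - 1"] a' Suc.prems m[of j] by simp
  moreover have "\<bar>\<sigma> a x * df a x\<bar> \<le> 2 * m j"
  proof -
    have "\<bar>\<sigma> a x * df a x\<bar> \<le> \<bar>df a x\<bar>" using sigma_le by (simp add: abs_mult mult_left_le_one_le)
    also have "\<dots> \<le> \<bar>Ef a x\<bar> + \<bar>Ef (a - 1) x\<bar>"
      using a'(2) abs_triangle_ineq4 by (simp add: mdiff_pos)
    also have "\<dots> \<le> 2 * m j" using Ef_a[of a] Ef_a[of "a - 1"] a'(2) by force
    finally show ?thesis .
  qed
  moreover have "Tf a x = Tf (a - 1) x + \<sigma> a x * df a x"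
    using Tf_Suc[of "a - 1" x] a'(2) by simp
  ultimately have "\<bar>Tf a x\<bar> \<le> \<bar>Tf a' x\<bar> + K * m j + 2 * m j" by linarith
  also have "\<dots> \<le> (K + 3) * (\<Sum>i<Suc j. m i)"
    using Suc.IH[OF a'(1)] by (simp add: algebra_simps)
  finally show ?case using m_nonneg[of "Suc j"] by simp
qed

lemma abs_Tf_le_sum_levels:
  assumes Ef_le: "\<forall>j k. stops j x \<le> enat k \<longrightarrow> enat k \<le> stops (Suc j) x \<longrightarrow> ereal \<bar>Ef k x\<bar> \<le> level j x"
    and sigma_le: "\<forall>k. \<bar>\<sigma> k x\<bar> \<le> 1" and m: "\<And>j. level j x = ereal (m j)"
  shows "\<exists>J. \<bar>Tf l x\<bar> \<le> (K + 3) * (\<Sum>j\<le>J. m j)"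
proof -
  have "\<exists>j. enat l < stops j x"
    using stops_ge[of "Suc l" x] by (cases "stops (Suc l) x") (auto intro!: exI[of _ "Suc l"])
  then obtain j where j: "enat l < stops j x" "\<forall>i<j. \<not> enat l < stops i x"
    by (subst (asm) exists_least_iff) blast
  then obtain J where J: "j = Suc J" by (cases j) auto
  then obtain a where a: "stops J x = enat a" "a \<le> l"
    using j(2) by (cases "stops J x") auto
  have "\<bar>Tf l x\<bar> \<le> \<bar>Tf a x\<bar> + \<bar>Tf l x - Tf a x\<bar>" by linarith
  also have "\<dots> \<le> (K + 3) * (\<Sum>i<J. m i) + m J + K * m J"
    using abs_Tf_at_stop_le[OF Ef_le sigma_le m a(1)] abs_Tf_diff_le_level[OF a] j(1) J m[of J]
    by (simp add: add_mono)
  also have "\<dots> \<le> (K + 3) * (\<Sum>i\<le>J. m i)"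
    using level_nonneg[of J x] m[of J] by (simp add: lessThan_Suc_atMost[symmetric] algebra_simps)
  finally show ?thesis by blast
qed

lemma ennreal_abs_Tf_le_sum:
  fixes P :: "nat \<Rightarrow> ennreal"
  assumes Ef_le: "\<forall>j k. stops j x \<le> enat k \<longrightarrow> enat k \<le> stops (Suc j) x \<longrightarrow> ereal \<bar>Ef k x\<bar> \<le> level j x"
    and sigma_le: "\<forall>k. \<bar>\<sigma> k x\<bar> \<le> 1" and level_le: "\<And>j. e2ennreal (level j x) \<le> 2 * P j"
  shows "ennreal \<bar>Tf l x\<bar> \<le> ennreal (2 * (K + 3)) * (\<Sum>j. P j)"
proof (cases "\<exists>j. level j x = \<infinity>")
  case True
  then obtain j where "level j x = \<infinity>" by blast
  then have "P j = top" using level_le[of j] by (simp add: top_unique ennreal_mult_eq_top_iff)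
  moreover have "P j \<le> (\<Sum>j. P j)" using sum_le_suminf[of P "{j}"] by simp
  ultimately show ?thesis using K_pos by (simp add: top_unique ennreal_mult_top)
next
  case False
  define m where "m j = real_of_ereal (level j x)" for j
  have m: "level j x = ereal (m j)" and m_nonneg: "0 \<le> m j" for j
    using False level_nonneg[of j x] unfolding m_def by (cases "level j x"; auto)+
  obtain J where J: "\<bar>Tf l x\<bar> \<le> (K + 3) * (\<Sum>j\<le>J. m j)"
    using abs_Tf_le_sum_levels[OF Ef_le sigma_le m] by blast
  have K3: "0 < K + 3" using K_pos by simp
  have "ennreal \<bar>Tf l x\<bar> \<le> ennreal (K + 3) * (\<Sum>j\<le>J. ennreal (m j))"
    using ennreal_leI[OF J] K3 m_nonneg by (simp add: ennreal_mult sum_nonneg sum_ennreal)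
  also have "\<dots> \<le> ennreal (K + 3) * (\<Sum>j\<le>J. 2 * P j)"
    using level_le m by (intro mult_left_mono sum_mono) auto
  also have "\<dots> = ennreal (2 * (K + 3)) * (\<Sum>j\<le>J. P j)"
  proof -
    have "ennreal (2 * (K + 3)) = ennreal 2 * ennreal (K + 3)"
      by (subst ennreal_mult) (use K3 in auto)
    then show ?thesis unfolding sum_distrib_left[symmetric] ennreal_numeral by (simp only: ac_simps)
  qed
  also have "\<dots> \<le> ennreal (2 * (K + 3)) * (\<Sum>j. P j)"
    by (intro mult_left_mono sum_le_suminf) auto
  finally show ?thesis .
qed

lemma AE_Tstar_le:
  "AE x in M. Tstar M F \<sigma> f x \<le> ennreal (2 * (K + 3)) *
     (\<Sum>j. e2ennreal (Pr_stop M F r (stops j) (Mf (stops j)) x) * indicator {y \<in> space M. stops j y < \<infinity>} x)"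
  using AE_level_le_two_Pr_stop AE_abs_Ef_le_level AE_abs_sigma_le_1 AE_space
proof eventually_elim
  case (elim x)
  have "e2ennreal (level j x)
      \<le> 2 * (e2ennreal (Pr_stop M F r (stops j) (Mf (stops j)) x) * indicator {y \<in> space M. stops j y < \<infinity>} x)"
    for j
  proof (cases "stops j x")
    case enat
    then show ?thesis using e2ennreal_le_two_mult[OF level_nonneg elim(1)[rule_format]] elim(4) by simp
  qed (simp add: level_def)
  then show ?case
    unfolding Tstar_def Tf_def[symmetric] by (intro SUP_least ennreal_abs_Tf_le_sum[OF elim(2,3)])
qed

end

theorem corollary2p2:
  fixes M :: "'a measure" and F :: "nat \<Rightarrow> 'a measure" and R r :: real
    and \<sigma> :: "nat \<Rightarrow> 'a \<Rightarrow> real"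
  assumes "prob_space M"
    and "is_filtration M F"
    and "regular_filtration M F R"
    and "r = 1 / (2 * (R + 3))"
    and "predictable_bounded M F \<sigma>"
  shows "\<exists>C>0. \<forall>f. f \<in> borel_measurable M \<longrightarrow> (\<exists>B. \<forall>x\<in>space M. \<bar>f x\<bar> \<le> B) \<longrightarrow>
     (\<exists>\<nu>. sparse_stopping M F \<nu> \<and>
        (AE x in M. Tstar M F \<sigma> f x \<le> ennreal C *
           (\<Sum>j. e2ennreal (Pr_stop M F r (\<nu> j) (maxop_stop M F (\<nu> j) f) x)
                 * indicator {y \<in> space M. \<nu> j y < \<infinity>} x)))"
proof -
  interpret filtered_prob_space M F
    using assms(1,2) by (rule filtered_prob_space.intro)
  have "1 \<le> R" using assms(3) by (rule regular_filtration_ge_1)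
  show ?thesis
  proof (intro exI[of _ "2 * (2 * (R + 3) + 3)"] conjI allI impI)
    show "0 < 2 * (2 * (R + 3) + 3)" using \<open>1 \<le> R\<close> by simp
    fix f :: "'a \<Rightarrow> real"
    assume "f \<in> borel_measurable M" "\<exists>B. \<forall>x\<in>space M. \<bar>f x\<bar> \<le> B"
    then interpret martingale_transform M F R r \<sigma> f
      using assms by (intro martingale_transform.intro martingale_transform_axioms.intro) unfold_locales
    show "\<exists>\<nu>. sparse_stopping M F \<nu> \<and>
        (AE x in M. Tstar M F \<sigma> f x \<le> ennreal (2 * (2 * (R + 3) + 3)) *
           (\<Sum>j. e2ennreal (Pr_stop M F r (\<nu> j) (maxop_stop M F (\<nu> j) f) x)
                 * indicator {y \<in> space M. \<nu> j y < \<infinity>} x))"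
      using sparse_stopping_stops AE_Tstar_le unfolding K_def by blast
  qed
qed

end
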